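(* Assume the different $\mathfrak{d}=(\delta)$ of $F$ is principal, and let $q\in\mathcal{O}$ be a product of prime elements. Then for all $\nu,\mu\in\mathcal{O}$, $$S(\delta^{-1}\nu,\delta^{-1}\mu;q)=\sum_{(d)\mid(\nu,\mu,q)}N((d))\,S\left(\delta^{-1},\delta^{-1}\frac{\nu\mu}{d^2};\frac{q}{d}\right),$$ where the sum runs over all principal ideals $(d)$ dividing the ideal $(\nu,\mu,q)=\nu\mathcal{O}+\mu\mathcal{O}+q\mathcal{O}$, and $d$ is any generator of $(d)$ (the summand does not depend on this choice).
   Context: $F$ is a totally real number field with ring of integers $\mathcal{O}$ and different $\mathfrak{d}$. A prime element is a generator of a nonzero prime ideal of $\mathcal{O}$; $N((d))$ is the absolute norm of the ideal $(d)$. $e(\nu)=\exp(2\pi i\,\mathrm{Tr}_{F/\mathbb{Q}}(\nu))$. For $\nu,\mu\in\mathfrak{d}^{-1}$ and nonzero $q\in\mathcal{O}$, $S(\nu,\mu;q)=\sum_{x\in(\mathcal{O}/q\mathcal{O})^\times}e\left(\frac{\nu x+\mu x^{-1}}{q}\right)$, where $xx^{-1}\equiv1\bmod q$. *)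

theory Defs
  imports Complex_Main "HOL-Computational_Algebra.Polynomial"
begin

text \<open>A number field is modelled as a subfield F of the complex numbers that is
finite-dimensional over the rationals.\<close>

definition subfield_C :: "complex set \<Rightarrow> bool" where
  "subfield_C F \<longleftrightarrow> 0 \<in> F \<and> 1 \<in> F \<and>
     (\<forall>x\<in>F. \<forall>y\<in>F. x + y \<in> F \<and> x * y \<in> F \<and> - x \<in> F) \<and>
     (\<forall>x\<in>F. x \<noteq> 0 \<longrightarrow> inverse x \<in> F)"

definition number_field :: "complex set \<Rightarrow> bool" where
  "number_field F \<longleftrightarrow> subfield_C F \<and>
     (\<exists>B. finite B \<and> B \<subseteq> F \<and>
        (\<forall>x\<in>F. \<exists>c :: complex \<Rightarrow> rat. x = (\<Sum>b\<in>B. of_rat (c b) * b)))"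

definition embeddings :: "complex set \<Rightarrow> (complex \<Rightarrow> complex) set" where
  "embeddings F = {\<sigma>. \<sigma> 1 = 1 \<and>
     (\<forall>x\<in>F. \<forall>y\<in>F. \<sigma> (x + y) = \<sigma> x + \<sigma> y \<and> \<sigma> (x * y) = \<sigma> x * \<sigma> y) \<and>
     (\<forall>x. x \<notin> F \<longrightarrow> \<sigma> x = 0)}"

definition totally_real_number_field :: "complex set \<Rightarrow> bool" where
  "totally_real_number_field F \<longleftrightarrow> number_field F \<and>
     (\<forall>\<sigma>\<in>embeddings F. \<forall>x\<in>F. \<sigma> x \<in> \<real>)"

definition trace :: "complex set \<Rightarrow> complex \<Rightarrow> complex" where
  "trace F x = (\<Sum>\<sigma>\<in>embeddings F. \<sigma> x)"

definition ints :: "complex set \<Rightarrow> complex set" ("\<O>") where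
  "\<O> F = {x \<in> F. algebraic_int x}"

definition dvdO :: "complex set \<Rightarrow> complex \<Rightarrow> complex \<Rightarrow> bool" where
  "dvdO F a b \<longleftrightarrow> (\<exists>k\<in>\<O> F. b = a * k)"

definition inv_different :: "complex set \<Rightarrow> complex set" where
  "inv_different F = {x \<in> F. \<forall>y\<in>\<O> F. trace F (x * y) \<in> \<int>}"

text \<open>The different is principal, generated by delta: d = delta O, i.e. d^{-1} = delta^{-1} O.\<close>
definition different_generator :: "complex set \<Rightarrow> complex \<Rightarrow> bool" where
  "different_generator F \<delta> \<longleftrightarrow> \<delta> \<in> \<O> F \<and> \<delta> \<noteq> 0 \<and>
     inv_different F = {x / \<delta> | x. x \<in> \<O> F}"

definition prime_elemO :: "complex set \<Rightarrow> complex \<Rightarrow> bool" where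
  "prime_elemO F p \<longleftrightarrow> p \<in> \<O> F \<and> p \<noteq> 0 \<and> \<not> dvdO F p 1 \<and>
     (\<forall>a\<in>\<O> F. \<forall>b\<in>\<O> F. dvdO F p (a * b) \<longrightarrow> dvdO F p a \<or> dvdO F p b)"

definition principal_ideal :: "complex set \<Rightarrow> complex \<Rightarrow> complex set" where
  "principal_ideal F d = {d * x | x. x \<in> \<O> F}"

definition congO :: "complex set \<Rightarrow> complex \<Rightarrow> (complex \<times> complex) set" where
  "congO F q = {(a, b). a \<in> \<O> F \<and> b \<in> \<O> F \<and> dvdO F q (a - b)}"

definition ideal_norm :: "complex set \<Rightarrow> complex \<Rightarrow> nat" where
  "ideal_norm F d = card (\<O> F // congO F d)"

definition unit_classes :: "complex set \<Rightarrow> complex \<Rightarrow> complex set set" where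
  "unit_classes F q = {x \<in> \<O> F. \<exists>y\<in>\<O> F. dvdO F q (x * y - 1)} // congO F q"

definition e :: "complex set \<Rightarrow> complex \<Rightarrow> complex" where
  "e F z = exp (2 * of_real pi * \<i> * trace F z)"

definition kloosterman :: "complex set \<Rightarrow> complex \<Rightarrow> complex \<Rightarrow> complex \<Rightarrow> complex" where
  "kloosterman F \<nu> \<mu> q =
     (\<Sum>C\<in>unit_classes F q.
        let x = (SOME x. x \<in> C);
            y = (SOME y. y \<in> \<O> F \<and> dvdO F q (x * y - 1))
        in e F ((\<nu> * x + \<mu> * y) / q))"

end

(*
  Write \<psi>\<^sub>c(t) = e(t/(\<delta>c)); since \<delta> generates the different, \<psi>\<^sub>c is an additive character of
  \<O>/c\<O> that is trivial exactly on c\<O>. Orthogonality of these characters turns S(\<nu>/\<delta>, \<mu>/\<delta>; q)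
  into the double sum over t, x mod q of \<psi>\<^sub>q(-t) \<psi>\<^sub>q(\<nu>x) restricted to tx \<equiv> -\<mu>. As q is a
  product of prime elements, every ideal (t, q) is principal, say (d), and t = d x with x a unit
  modulo q/d, unique modulo q/d. The congruence d x y \<equiv> -\<mu> (mod q) is solvable only if d | \<mu>, and
  then its solutions y form one class modulo q/d, i.e. N(d) classes modulo q; summing \<psi>\<^sub>q(\<nu>y) over
  them gives N(d) \<psi>\<^bsub>q/d\<^esub>(-(\<nu>/d)(\<mu>/d) x\<^bsup>-1\<^esup>) if d | \<nu> and 0 otherwise. The substitution x \<mapsto> -x
  turns the remaining sum over units modulo q/d into S(1/\<delta>, \<nu>\<mu>/(\<delta>d\<^sup>2); q/d).
*)

theory Submission
  imports Defs Jordan_Normal_Form.Determinant Jordan_Normal_Form.Char_Poly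
begin

section \<open>Algebraic integers form a ring\<close>

lemma algebraic_int_if_int_matrix_eigenvalue:
  fixes x :: complex and gs :: "complex list"
  assumes nz: "\<exists>g\<in>set gs. g \<noteq> 0"
    and rel: "\<forall>i<length gs. \<exists>c::nat\<Rightarrow>int. x * gs!i = (\<Sum>j<length gs. of_int (c j) * gs!j)"
  shows "algebraic_int x"
proof -
  define n where "n = length gs"
  define C where "C i = (SOME c::nat\<Rightarrow>int. x * gs!i = (\<Sum>j<n. of_int (c j) * gs!j))" for i
  have C: "x * gs!i = (\<Sum>j<n. of_int (C i j) * gs!j)" if "i < n" for i
    unfolding C_def using someI_ex[OF rel[rule_format, OF that[unfolded n_def]]] n_def by simp
  define A :: "int mat" where "A = mat n n (\<lambda>(i,j). C i j)"
  have A: "A \<in> carrier_mat n n" unfolding A_def by simp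
  define Ac :: "complex mat" where "Ac = of_int_hom.mat_hom A"
  have Ac: "Ac \<in> carrier_mat n n" unfolding Ac_def using A by simp
  define v :: "complex vec" where "v = vec n (\<lambda>i. gs!i)"
  have v: "v \<in> carrier_vec n" unfolding v_def by simp
  have vnz: "v \<noteq> 0\<^sub>v n"
  proof
    assume "v = 0\<^sub>v n"
    then have "\<forall>i<n. gs!i = 0" unfolding v_def by (metis index_vec index_zero_vec(1))
    then show False using nz unfolding n_def by (metis in_set_conv_nth)
  qed
  have "Ac *\<^sub>v v = x \<cdot>\<^sub>v v"
  proof (rule eq_vecI)
    fix i assume i: "i < dim_vec (x \<cdot>\<^sub>v v)"
    then have i': "i < n" using v by simp
    have "(Ac *\<^sub>v v) $ i = (\<Sum>j<n. of_int (C i j) * gs!j)"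
      using i' Ac A unfolding Ac_def v_def A_def
      by (simp add: scalar_prod_def lessThan_atLeast0 mult.commute)
    also have "\<dots> = x * gs!i" using C[OF i'] by simp
    also have "\<dots> = (x \<cdot>\<^sub>v v) $ i" using i' unfolding v_def by simp
    finally show "(Ac *\<^sub>v v) $ i = (x \<cdot>\<^sub>v v) $ i" .
  qed (use v Ac in simp)
  then have "eigenvalue Ac x" unfolding eigenvalue_def eigenvector_def using v vnz Ac by auto
  then have "poly (char_poly Ac) x = 0" using eigenvalue_root_char_poly[OF Ac] by simp
  moreover have "char_poly Ac = of_int_poly (char_poly A)"
    unfolding Ac_def by (rule of_int_hom.char_poly_hom[OF A])
  ultimately have "poly (of_int_poly (char_poly A)) x = 0" by simp
  moreover have "monic (char_poly A)" using degree_monic_char_poly[OF A] by simp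
  ultimately show ?thesis unfolding algebraic_int_altdef_ipoly by blast
qed

definition int_span :: "complex set \<Rightarrow> complex set" where
  "int_span G = {z. \<exists>c::complex\<Rightarrow>int. z = (\<Sum>h\<in>G. of_int (c h) * h)}"

lemma int_span_zero: "0 \<in> int_span G"
  unfolding int_span_def by (rule CollectI, rule exI[of _ "\<lambda>_. 0"]) simp

lemma int_span_base: assumes "finite G" "g \<in> G" shows "g \<in> int_span G"
proof -
  have "(\<Sum>h\<in>G. of_int (if h = g then 1 else 0) * h) = (\<Sum>h\<in>G. if h = g then h else 0)"
    by (rule sum.cong) auto
  also have "\<dots> = g" using assms by (simp add: sum.delta')
  finally show ?thesis
    unfolding int_span_def by (intro CollectI exI[of _ "\<lambda>h. if h = g then 1 else 0"]) simp
qed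

lemma int_span_add: assumes "a \<in> int_span G" "b \<in> int_span G" shows "a + b \<in> int_span G"
proof -
  obtain c1 c2 where "a = (\<Sum>h\<in>G. of_int (c1 h) * h)" "b = (\<Sum>h\<in>G. of_int (c2 h) * h)"
    using assms unfolding int_span_def by blast
  then have "a + b = (\<Sum>h\<in>G. of_int (c1 h + c2 h) * h)"
    by (simp add: sum.distrib distrib_right)
  then show ?thesis unfolding int_span_def by (intro CollectI exI[of _ "\<lambda>h. c1 h + c2 h"])
qed

lemma int_span_scale: assumes "a \<in> int_span G" shows "of_int k * a \<in> int_span G"
proof -
  obtain c where "a = (\<Sum>h\<in>G. of_int (c h) * h)"
    using assms unfolding int_span_def by blast
  then have "of_int k * a = (\<Sum>h\<in>G. of_int (k * c h) * h)"
    by (simp add: sum_distrib_left mult.assoc)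
  then show ?thesis unfolding int_span_def by (intro CollectI exI[of _ "\<lambda>h. k * c h"])
qed

lemma int_span_sum:
  assumes "finite I" "\<And>i. i \<in> I \<Longrightarrow> f i \<in> int_span G" shows "sum f I \<in> int_span G"
  using assms by (induction I rule: finite_induct) (auto intro: int_span_zero int_span_add)

lemma int_span_mult_closed:
  assumes "finite G" "\<forall>g\<in>G. x * g \<in> int_span G" "z \<in> int_span G"
  shows "x * z \<in> int_span G"
proof -
  obtain c where z: "z = (\<Sum>h\<in>G. of_int (c h) * h)" using assms unfolding int_span_def by blast
  have "x * z = (\<Sum>h\<in>G. of_int (c h) * (x * h))" unfolding z
    by (simp add: sum_distrib_left algebra_simps)
  also have "\<dots> \<in> int_span G" using assms by (intro int_span_sum int_span_scale) auto
  finally show ?thesis .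
qed

lemma algebraic_int_if_int_span_stable:
  assumes "finite G" "\<exists>g\<in>G. g \<noteq> 0" "\<forall>g\<in>G. x * g \<in> int_span G"
  shows "algebraic_int x"
proof -
  obtain gs where gs: "set gs = G" "distinct gs" using finite_distinct_list[OF assms(1)] by blast
  have sum_G: "(\<Sum>h\<in>G. f h) = (\<Sum>j<length gs. f (gs!j))" for f :: "complex \<Rightarrow> complex"
  proof -
    have "(\<Sum>h\<in>G. f h) = sum_list (map f gs)" using gs by (simp add: sum_list_distinct_conv_sum_set)
    then show ?thesis by (simp add: sum_list_sum_nth lessThan_atLeast0)
  qed
  show ?thesis
  proof (rule algebraic_int_if_int_matrix_eigenvalue[of gs])
    show "\<exists>g\<in>set gs. g \<noteq> 0" using assms gs by auto
    show "\<forall>i<length gs. \<exists>c. x * gs ! i = (\<Sum>j<length gs. of_int (c j) * gs ! j)"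
    proof (intro allI impI)
      fix i assume "i < length gs"
      then have "gs!i \<in> G" using gs by auto
      then obtain c where "x * gs!i = (\<Sum>h\<in>G. of_int (c h) * h)"
        using assms unfolding int_span_def by blast
      then show "\<exists>c. x * gs ! i = (\<Sum>j<length gs. of_int (c j) * gs ! j)"
        using sum_G by (intro exI[of _ "\<lambda>j. c (gs!j)"]) simp
    qed
  qed
qed

lemma monic_root_power_eq:
  fixes x :: complex
  assumes "poly (of_int_poly p) x = 0" "monic p"
  shows "x ^ degree p = - (\<Sum>i<degree p. of_int (coeff p i) * x ^ i)"
proof -
  have "0 = (\<Sum>i\<le>degree p. of_int (coeff p i) * x ^ i)"
    using assms(1) by (simp add: poly_altdef degree_map_poly)
  also have "\<dots> = (\<Sum>i<degree p. of_int (coeff p i) * x ^ i) + x ^ degree p"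
    using assms(2) by (simp add: lessThan_Suc_atMost[symmetric])
  finally show ?thesis by (simp add: eq_neg_iff_add_eq_0 add.commute)
qed

lemma monic_root_degree_pos:
  assumes "poly (of_int_poly p) (x :: complex) = 0" "monic p"
  shows "degree p > 0"
proof (rule ccontr)
  assume "\<not> degree p > 0"
  then have "p = 1" using assms(2) monic_degree_0 by blast
  then show False using assms(1) by simp
qed

lemma monic_root_power_in_int_span:
  fixes x w :: complex
  assumes "poly (of_int_poly p) x = 0" "monic p" "\<And>i. i < degree p \<Longrightarrow> x ^ i * w \<in> int_span G"
  shows "x ^ degree p * w \<in> int_span G"
proof -
  have "x ^ degree p * w = (\<Sum>i<degree p. of_int (- coeff p i) * (x ^ i * w))"
    unfolding monic_root_power_eq[OF assms(1,2)] by (simp add: sum_distrib_right mult.assoc sum_negf)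
  also have "\<dots> \<in> int_span G" using assms(3) by (intro int_span_sum int_span_scale) auto
  finally show ?thesis .
qed

text \<open>The monomials \<open>x\<^sup>i y\<^sup>j\<close> below the degrees of monic equations of \<open>x\<close> and \<open>y\<close> span a
  finitely generated \<open>\<int>\<close>-module stable under multiplication by \<open>x\<close> and by \<open>y\<close>.\<close>

lemma algebraic_ints_common_int_span:
  fixes x y :: complex
  assumes "algebraic_int x" "algebraic_int y"
  obtains G where "finite G" "1 \<in> G" "\<forall>g\<in>G. x * g \<in> int_span G" "\<forall>g\<in>G. y * g \<in> int_span G"
proof -
  obtain p where p: "poly (of_int_poly p) x = 0" "monic p"
    using assms(1) unfolding algebraic_int_altdef_ipoly by blast
  obtain q where q: "poly (of_int_poly q) y = 0" "monic q"
    using assms(2) unfolding algebraic_int_altdef_ipoly by blast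
  define G where "G = (\<lambda>(i,j). x^i * y^j) ` ({..<degree p} \<times> {..<degree q})"
  have fin: "finite G" unfolding G_def by simp
  have mono: "x^i * y^j \<in> int_span G" if "i < degree p" "j < degree q" for i j
    using that by (intro int_span_base fin) (auto simp: G_def)
  have "x * g \<in> int_span G \<and> y * g \<in> int_span G" if "g \<in> G" for g
  proof -
    obtain i j where ij: "i < degree p" "j < degree q" "g = x^i * y^j"
      using \<open>g \<in> G\<close> unfolding G_def by auto
    have "x^(Suc i) * y^j \<in> int_span G"
    proof (cases "Suc i < degree p")
      case False
      then have "Suc i = degree p" using ij(1) by simp
      then show ?thesis using monic_root_power_in_int_span[OF p, of "y^j" G] mono ij(2) by metis
    qed (use mono ij(2) in blast)
    moreover have "y^(Suc j) * x^i \<in> int_span G"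
    proof (cases "Suc j < degree q")
      case True
      then show ?thesis using mono[of i "Suc j"] ij(1) by (simp add: mult.commute)
    next
      case False
      then have "Suc j = degree q" using ij(2) by simp
      then show ?thesis
        using monic_root_power_in_int_span[OF q, of "x^i" G] mono ij(1) by (metis mult.commute)
    qed
    ultimately show ?thesis using ij(3) by (simp add: algebra_simps)
  qed
  moreover have "1 \<in> G"
    unfolding G_def using monic_root_degree_pos[OF p] monic_root_degree_pos[OF q]
    by (intro image_eqI[of _ _ "(0,0)"]) auto
  ultimately show ?thesis using that fin by blast
qed

lemma algebraic_int_times [intro]:
  fixes x y :: complex
  assumes "algebraic_int x" "algebraic_int y"
  shows "algebraic_int (x * y)"
proof -
  obtain G where G: "finite G" "1 \<in> G" "\<forall>g\<in>G. x * g \<in> int_span G" "\<forall>g\<in>G. y * g \<in> int_span G"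
    using algebraic_ints_common_int_span[OF assms] .
  show ?thesis
  proof (rule algebraic_int_if_int_span_stable[OF G(1)])
    show "\<exists>g\<in>G. g \<noteq> 0" using G(2) by (intro bexI[of _ 1]) auto
    show "\<forall>g\<in>G. x * y * g \<in> int_span G"
      using G int_span_mult_closed[OF G(1) G(3)] by (simp add: mult.assoc)
  qed
qed

lemma algebraic_int_plus [intro]:
  fixes x y :: complex
  assumes "algebraic_int x" "algebraic_int y"
  shows "algebraic_int (x + y)"
proof -
  obtain G where G: "finite G" "1 \<in> G" "\<forall>g\<in>G. x * g \<in> int_span G" "\<forall>g\<in>G. y * g \<in> int_span G"
    using algebraic_ints_common_int_span[OF assms] .
  show ?thesis
  proof (rule algebraic_int_if_int_span_stable[OF G(1)])
    show "\<exists>g\<in>G. g \<noteq> 0" using G(2) by (intro bexI[of _ 1]) auto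
    show "\<forall>g\<in>G. (x + y) * g \<in> int_span G" using G int_span_add by (simp add: distrib_right)
  qed
qed

lemma mem_ints_iff: "x \<in> \<O> F \<longleftrightarrow> x \<in> F \<and> algebraic_int x"
  by (simp add: ints_def)

locale complex_number_field =
  fixes F :: "complex set"
  assumes number_field: "number_field F"
begin

lemma subfield: "subfield_C F"
  using number_field unfolding number_field_def by blast

lemma F_0 [simp, intro]: "0 \<in> F" and F_1 [simp, intro]: "1 \<in> F"
  using subfield unfolding subfield_C_def by auto

lemma F_add [intro]: "x \<in> F \<Longrightarrow> y \<in> F \<Longrightarrow> x + y \<in> F"
  and F_mult [intro]: "x \<in> F \<Longrightarrow> y \<in> F \<Longrightarrow> x * y \<in> F"
  and F_uminus [intro]: "x \<in> F \<Longrightarrow> - x \<in> F"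
  using subfield unfolding subfield_C_def by auto

lemma F_inverse [intro]: "x \<in> F \<Longrightarrow> inverse x \<in> F"
  using subfield unfolding subfield_C_def by (cases "x = 0") auto

lemma F_diff [intro]: "x \<in> F \<Longrightarrow> y \<in> F \<Longrightarrow> x - y \<in> F"
  using F_add F_uminus by (metis diff_conv_add_uminus)

lemma F_divide [intro]: "x \<in> F \<Longrightarrow> y \<in> F \<Longrightarrow> x / y \<in> F"
  using F_mult F_inverse by (simp add: divide_inverse)

lemma F_of_nat [intro]: "of_nat n \<in> F"
  by (induction n) (auto simp: F_add)

lemma F_of_int [intro]: "of_int k \<in> F"
  using F_of_nat[of "nat k"] F_uminus[OF F_of_nat[of "nat (- k)"]]
  by (cases "k \<ge> 0") auto

lemma F_of_rat [intro]: "of_rat r \<in> F"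
proof -
  obtain a b where "r = Rat.Fract a b" "b > 0" by (cases r) auto
  then show ?thesis by (auto simp: of_rat_rat)
qed

lemma F_sum [intro]: "(\<And>i. i \<in> I \<Longrightarrow> f i \<in> F) \<Longrightarrow> sum f I \<in> F"
  by (induction I rule: infinite_finite_induct) auto

lemma ints_subset [intro]: "x \<in> \<O> F \<Longrightarrow> x \<in> F"
  by (simp add: mem_ints_iff)

lemma ints_0 [simp, intro]: "0 \<in> \<O> F" and ints_1 [simp, intro]: "1 \<in> \<O> F"
  by (auto simp: mem_ints_iff)

lemma ints_add [intro]: "x \<in> \<O> F \<Longrightarrow> y \<in> \<O> F \<Longrightarrow> x + y \<in> \<O> F"
  and ints_mult [intro]: "x \<in> \<O> F \<Longrightarrow> y \<in> \<O> F \<Longrightarrow> x * y \<in> \<O> F"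
  and ints_uminus [intro]: "x \<in> \<O> F \<Longrightarrow> - x \<in> \<O> F"
  by (auto simp: mem_ints_iff)

lemma ints_diff [intro]: "x \<in> \<O> F \<Longrightarrow> y \<in> \<O> F \<Longrightarrow> x - y \<in> \<O> F"
  using ints_add ints_uminus by (metis diff_conv_add_uminus)

lemma ints_of_int [intro]: "of_int k \<in> \<O> F"
  by (auto simp: mem_ints_iff)

lemma ints_sum [intro]: "(\<And>i. i \<in> I \<Longrightarrow> f i \<in> \<O> F) \<Longrightarrow> sum f I \<in> \<O> F"
  by (induction I rule: infinite_finite_induct) auto

lemma ints_power [intro]: "x \<in> \<O> F \<Longrightarrow> x ^ n \<in> \<O> F"
  by (induction n) auto

lemma emb_1: "\<sigma> \<in> embeddings F \<Longrightarrow> \<sigma> 1 = 1"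
  and emb_add: "\<sigma> \<in> embeddings F \<Longrightarrow> x \<in> F \<Longrightarrow> y \<in> F \<Longrightarrow> \<sigma> (x + y) = \<sigma> x + \<sigma> y"
  and emb_mult: "\<sigma> \<in> embeddings F \<Longrightarrow> x \<in> F \<Longrightarrow> y \<in> F \<Longrightarrow> \<sigma> (x * y) = \<sigma> x * \<sigma> y"
  unfolding embeddings_def by auto

lemma emb_0: assumes "\<sigma> \<in> embeddings F" shows "\<sigma> 0 = 0"
  using emb_add[OF assms, of 0 0] by simp

lemma emb_uminus: assumes "\<sigma> \<in> embeddings F" "x \<in> F" shows "\<sigma> (- x) = - \<sigma> x"
proof -
  have "\<sigma> x + \<sigma> (- x) = 0"
    using emb_add[OF assms(1), of x "- x"] assms(2) emb_0[OF assms(1)] by auto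
  then show ?thesis by (simp add: eq_neg_iff_add_eq_0 add.commute)
qed

lemma emb_of_nat: assumes "\<sigma> \<in> embeddings F" shows "\<sigma> (of_nat n) = of_nat n"
proof (induction n)
  case (Suc n)
  have "\<sigma> (of_nat (Suc n)) = \<sigma> 1 + \<sigma> (of_nat n)" using emb_add[OF assms] by auto
  then show ?case using Suc emb_1[OF assms] by simp
qed (use emb_0[OF assms] in simp)

lemma emb_of_int: assumes "\<sigma> \<in> embeddings F" shows "\<sigma> (of_int k) = of_int k"
proof (cases "k \<ge> 0")
  case True then show ?thesis using emb_of_nat[OF assms, of "nat k"] by simp
next
  case False
  then have "(of_int k :: complex) = - of_nat (nat (- k))" by simp
  then show ?thesis
    using emb_uminus[OF assms, of "of_nat (nat (- k))"] emb_of_nat[OF assms, of "nat (- k)"] by auto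
qed

lemma emb_inverse: assumes "\<sigma> \<in> embeddings F" "x \<in> F" "x \<noteq> 0"
  shows "\<sigma> (inverse x) = inverse (\<sigma> x)"
proof -
  have "\<sigma> x * \<sigma> (inverse x) = 1"
    using emb_mult[OF assms(1), of x "inverse x"] assms emb_1[OF assms(1)] by auto
  then show ?thesis by (metis inverse_unique)
qed

lemma emb_of_rat: assumes "\<sigma> \<in> embeddings F" shows "\<sigma> (of_rat r) = of_rat r"
proof -
  obtain a b where ab: "r = Rat.Fract a b" "b > 0" by (cases r) auto
  then have "(of_rat r :: complex) = of_int a * inverse (of_int b)"
    by (simp add: of_rat_rat divide_inverse)
  moreover have "\<sigma> (of_int a * inverse (of_int b)) = \<sigma> (of_int a) * \<sigma> (inverse (of_int b))"
    using emb_mult[OF assms] F_of_int F_inverse by blast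
  moreover have "\<sigma> (inverse (of_int b)) = inverse (\<sigma> (of_int b))"
    using emb_inverse[OF assms, of "of_int b"] F_of_int ab(2) by simp
  ultimately show ?thesis using emb_of_int[OF assms] by simp
qed

lemma emb_sum: assumes "\<sigma> \<in> embeddings F" "\<And>i. i \<in> I \<Longrightarrow> f i \<in> F"
  shows "\<sigma> (sum f I) = (\<Sum>i\<in>I. \<sigma> (f i))"
  using assms(2)
proof (induction I rule: infinite_finite_induct)
  case (insert x A)
  have "\<sigma> (sum f (insert x A)) = \<sigma> (f x + sum f A)" using insert by simp
  also have "\<dots> = \<sigma> (f x) + \<sigma> (sum f A)" using insert F_sum by (intro emb_add[OF assms(1)]) auto
  finally show ?case using insert by simp
qed (use emb_0[OF assms(1)] in simp_all)

lemma inclusion_mem_embeddings: "(\<lambda>x. if x \<in> F then x else 0) \<in> embeddings F"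
  unfolding embeddings_def by auto

lemma half_notin_ints: "(1/2 :: complex) \<notin> \<O> F"
proof
  assume "(1/2 :: complex) \<in> \<O> F"
  then have "algebraic_int (1/2 :: complex)" by (simp add: mem_ints_iff)
  moreover have "(1/2 :: complex) \<in> \<rat>" by (metis Rats_divide Rats_1 Rats_number_of numeral_One)
  ultimately have "(1/2 :: complex) \<in> \<int>" by (rule rational_algebraic_int_is_int)
  then obtain k where "(1/2 :: complex) = of_int k" by (elim Ints_cases)
  then have "(1::int) = 2 * k" by (simp add: field_simps) (metis of_int_1 of_int_eq_iff of_int_mult of_int_numeral)
  then show False by presburger
qed

lemma trace_add: "x \<in> F \<Longrightarrow> y \<in> F \<Longrightarrow> trace F (x + y) = trace F x + trace F y"
  unfolding trace_def by (simp add: emb_add sum.distrib)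

lemma trace_rat_mult: "x \<in> F \<Longrightarrow> trace F (of_rat r * x) = of_rat r * trace F x"
  unfolding trace_def by (simp add: emb_mult emb_of_rat F_of_rat sum_distrib_left)

lemma trace_int_mult: "x \<in> F \<Longrightarrow> trace F (of_int k * x) = of_int k * trace F x"
  using trace_rat_mult[of x "of_int k"] by simp

lemma trace_uminus: "x \<in> F \<Longrightarrow> trace F (- x) = - trace F x"
  unfolding trace_def by (simp add: emb_uminus sum_negf)

lemma trace_diff: "x \<in> F \<Longrightarrow> y \<in> F \<Longrightarrow> trace F (x - y) = trace F x - trace F y"
  using trace_add[of x "- y"] trace_uminus[of y] by auto

lemma trace_sum: "(\<And>i. i \<in> I \<Longrightarrow> f i \<in> F) \<Longrightarrow> trace F (sum f I) = (\<Sum>i\<in>I. trace F (f i))"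
  unfolding trace_def by (simp add: emb_sum sum.swap[of _ "embeddings F"])

lemma dvdO_refl: "a \<in> \<O> F \<Longrightarrow> dvdO F a a"
  unfolding dvdO_def by (rule bexI[of _ 1]) auto

lemma dvdO_0: "dvdO F a 0"
  unfolding dvdO_def by (rule bexI[of _ 0]) auto

lemma dvdO_0_left_iff: "dvdO F 0 x \<longleftrightarrow> x = 0"
  unfolding dvdO_def by auto

lemma dvdO_add: assumes "dvdO F a b" "dvdO F a c" shows "dvdO F a (b + c)"
proof -
  obtain k k' where "k \<in> \<O> F" "b = a * k" "k' \<in> \<O> F" "c = a * k'"
    using assms unfolding dvdO_def by blast
  then show ?thesis unfolding dvdO_def by (intro bexI[of _ "k + k'"]) (auto simp: distrib_left)
qed

lemma dvdO_uminus: "dvdO F a b \<Longrightarrow> dvdO F a (- b)"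
  unfolding dvdO_def by (auto intro!: bexI[of _ "- k" for k])

lemma dvdO_diff: "dvdO F a b \<Longrightarrow> dvdO F a c \<Longrightarrow> dvdO F a (b - c)"
  using dvdO_add[of a b "- c"] dvdO_uminus[of a c] by simp

lemma dvdO_diff_commute: "dvdO F c (a - b) \<Longrightarrow> dvdO F c (b - a)"
  using dvdO_uminus[of c "a - b"] by simp

lemma dvdO_diff_trans: "dvdO F c (a - b) \<Longrightarrow> dvdO F c (b - d) \<Longrightarrow> dvdO F c (a - d)"
  using dvdO_add[of c "a - b" "b - d"] by simp

lemma dvdO_mult: "dvdO F a b \<Longrightarrow> c \<in> \<O> F \<Longrightarrow> dvdO F a (b * c)"
  unfolding dvdO_def by (auto simp: mult.assoc intro!: bexI)

lemma dvdO_mult_left: "dvdO F a b \<Longrightarrow> c \<in> \<O> F \<Longrightarrow> dvdO F a (c * b)"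
  using dvdO_mult by (simp add: mult.commute)

lemma dvdO_trans: "dvdO F a b \<Longrightarrow> dvdO F b c \<Longrightarrow> dvdO F a c"
  unfolding dvdO_def by (auto simp: mult.assoc intro!: bexI)

lemma dvdO_cancel_factor: "d \<noteq> 0 \<Longrightarrow> c = d * c' \<Longrightarrow> dvdO F c (d * z) \<Longrightarrow> dvdO F c' z"
  unfolding dvdO_def by (auto simp: mult.assoc)

lemma dvdO_mult_factor: "c = d * c' \<Longrightarrow> dvdO F c' z \<Longrightarrow> dvdO F c (d * z)"
  unfolding dvdO_def by (auto simp: mult.assoc)

lemma mem_congO_iff: "(x, y) \<in> congO F q \<longleftrightarrow> x \<in> \<O> F \<and> y \<in> \<O> F \<and> dvdO F q (x - y)"
  unfolding congO_def by simp

lemma equiv_congO: assumes "q \<in> \<O> F" shows "equiv (\<O> F) (congO F q)"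
proof (rule equivI)
  show "congO F q \<subseteq> \<O> F \<times> \<O> F" unfolding congO_def by auto
  show "refl_on (\<O> F) (congO F q)" unfolding refl_on_def congO_def using dvdO_0 by auto
  show "sym (congO F q)" unfolding sym_def congO_def using dvdO_diff_commute by blast
  show "trans (congO F q)" unfolding trans_def congO_def using dvdO_diff_trans by blast
qed

end

subsection \<open>Finiteness of the residue rings\<close>

interpretation Qv: vector_space "\<lambda>(r::rat) (x::complex). of_rat r * x"
  by unfold_locales (auto simp: algebra_simps of_rat_add of_rat_mult)

lemma common_denominator:
  fixes f :: "'a \<Rightarrow> rat"
  assumes "finite S"
  obtains N :: int where "N > 0" "\<And>s. s \<in> S \<Longrightarrow> \<exists>k::int. of_int N * f s = of_int k"
proof -
  define N where "N = (\<Prod>s\<in>S. snd (quotient_of (f s)))"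
  have "N > 0" unfolding N_def by (intro prod_pos) (auto simp: quotient_of_denom_pos')
  moreover have "\<exists>k::int. of_int N * f s = of_int k" if s: "s \<in> S" for s
  proof -
    obtain a b where ab: "quotient_of (f s) = (a, b)" by (cases "quotient_of (f s)")
    have "b dvd N" unfolding N_def using dvd_prodI[OF assms s, of "\<lambda>s. snd (quotient_of (f s))"] ab
      by simp
    then obtain m where "N = b * m" by (elim dvdE)
    moreover have "f s = of_int a / of_int b" "b > 0"
      using ab by (auto intro: quotient_of_div quotient_of_denom_pos)
    ultimately show ?thesis by (intro exI[of _ "m * a"]) (simp add: field_simps)
  qed
  ultimately show ?thesis using that by blast
qed

context complex_number_field
begin

lemma ex_int_multiple_mem_ints:
  assumes "x \<in> F"
  obtains N :: int where "N > 0" "of_int N * x \<in> \<O> F"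
proof -
  obtain B where B: "finite B" "B \<subseteq> F" "\<forall>x\<in>F. \<exists>c. x = (\<Sum>b\<in>B. of_rat (c b) * b)"
    using number_field unfolding number_field_def by blast
  have "\<forall>b\<in>B. \<exists>c. x * b = (\<Sum>b'\<in>B. of_rat (c b') * b')" using assms B by auto
  from bchoice[OF this] obtain C where C: "\<forall>b\<in>B. x * b = (\<Sum>b'\<in>B. of_rat (C b b') * b')"
    by blast
  obtain N where N: "N > 0" "\<And>p. p \<in> B \<times> B \<Longrightarrow> \<exists>k::int. of_int N * C (fst p) (snd p) = of_int k"
    using common_denominator[of "B \<times> B" "\<lambda>p. C (fst p) (snd p)"] B(1) by blast
  then have "\<forall>p\<in>B \<times> B. \<exists>k::int. of_int N * C (fst p) (snd p) = of_int k" by blast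
  from bchoice[OF this] obtain K where K: "\<forall>p\<in>B \<times> B. of_int N * C (fst p) (snd p) = of_int (K p)"
    by blast
  have "\<exists>g\<in>B. g \<noteq> 0"
  proof (rule ccontr)
    assume "\<not> (\<exists>g\<in>B. g \<noteq> 0)"
    then have "(\<Sum>b\<in>B. of_rat (c b) * b) = (0::complex)" for c by (intro sum.neutral) auto
    moreover obtain c where "1 = (\<Sum>b\<in>B. of_rat (c b) * b)" using B(3) F_1 by blast
    ultimately show False by (metis zero_neq_one)
  qed
  moreover have "of_int N * x * b \<in> int_span B" if b: "b \<in> B" for b
  proof -
    have "of_int N * x * b = (\<Sum>b'\<in>B. of_rat (of_int N * C b b') * b')"
      using C b by (simp add: sum_distrib_left mult.assoc of_rat_mult)
    also have "\<dots> = (\<Sum>b'\<in>B. of_int (K (b, b')) * b')" using K b by (intro sum.cong refl) auto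
    finally show ?thesis unfolding int_span_def by (intro CollectI exI[of _ "\<lambda>b'. K (b, b')"])
  qed
  ultimately have "algebraic_int (of_int N * x)" using B(1) by (intro algebraic_int_if_int_span_stable) auto
  then show ?thesis using that N(1) assms by (auto simp: mem_ints_iff)
qed

lemma ex_Q_basis_in_ints: "\<exists>E. finite E \<and> E \<subseteq> \<O> F \<and> Qv.independent E \<and> F \<subseteq> Qv.span E"
proof -
  obtain B where B: "finite B" "B \<subseteq> F" "\<forall>x\<in>F. \<exists>c. x = (\<Sum>b\<in>B. of_rat (c b) * b)"
    using number_field unfolding number_field_def by blast
  have "\<forall>b\<in>B. \<exists>N::int. N > 0 \<and> of_int N * b \<in> \<O> F"
    using B(2) ex_int_multiple_mem_ints by (metis subsetD)
  from bchoice[OF this] obtain N where N: "\<forall>b\<in>B. N b > 0 \<and> of_int (N b) * b \<in> \<O> F"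
    by blast
  define S where "S = (\<lambda>b. of_int (N b) * b) ` B"
  have S: "finite S" "S \<subseteq> \<O> F" unfolding S_def using B(1) N by auto
  have "B \<subseteq> Qv.span S"
  proof
    fix b assume b: "b \<in> B"
    have "of_int (N b) * b \<in> Qv.span S" unfolding S_def using b by (intro Qv.span_base) auto
    then have "of_rat (1 / of_int (N b)) * (of_int (N b) * b) \<in> Qv.span S" by (rule Qv.span_scale)
    then show "b \<in> Qv.span S" using N b by (auto simp: of_rat_divide)
  qed
  moreover have "F \<subseteq> Qv.span B"
  proof
    fix x assume "x \<in> F"
    then obtain c where "x = (\<Sum>b\<in>B. of_rat (c b) * b)" using B(3) by blast
    then show "x \<in> Qv.span B"
      unfolding Qv.span_finite[OF B(1)] by (intro image_eqI[OF _ UNIV_I, of _ _ c]) simp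
  qed
  ultimately have FS: "F \<subseteq> Qv.span S" using Qv.span_minimal[OF _ Qv.subspace_span] by blast
  obtain E where E: "E \<subseteq> S" "Qv.independent E" "S \<subseteq> Qv.span E"
    by (rule Qv.maximal_independent_subset)
  have "F \<subseteq> Qv.span E" using FS Qv.span_minimal[OF E(3) Qv.subspace_span] by blast
  moreover have "finite E" using E(1) S(1) finite_subset by blast
  ultimately show ?thesis using E S by (intro exI[of _ E]) auto
qed

definition qbasis :: "complex list" where
  "qbasis = (SOME es. distinct es \<and> set es \<subseteq> \<O> F \<and> Qv.independent (set es) \<and> F \<subseteq> Qv.span (set es))"

abbreviation qdim :: nat where "qdim \<equiv> length qbasis"

lemma qbasis: "distinct qbasis" "set qbasis \<subseteq> \<O> F" "Qv.independent (set qbasis)" "F \<subseteq> Qv.span (set qbasis)"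
proof -
  obtain E where E: "finite E" "E \<subseteq> \<O> F" "Qv.independent E" "F \<subseteq> Qv.span E"
    using ex_Q_basis_in_ints by blast
  obtain es where "set es = E" "distinct es" using finite_distinct_list[OF E(1)] by blast
  then have "\<exists>es. distinct es \<and> set es \<subseteq> \<O> F \<and> Qv.independent (set es) \<and> F \<subseteq> Qv.span (set es)"
    using E by blast
  then show "distinct qbasis" "set qbasis \<subseteq> \<O> F" "Qv.independent (set qbasis)" "F \<subseteq> Qv.span (set qbasis)"
    unfolding qbasis_def by (metis (mono_tags, lifting) someI_ex)+
qed

lemma sum_set_qbasis: "(\<Sum>v\<in>set qbasis. f v) = (\<Sum>i<qdim. f (qbasis!i))"
proof -
  have "(\<Sum>v\<in>set qbasis. f v) = sum_list (map f qbasis)"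
    using qbasis(1) by (simp add: sum_list_distinct_conv_sum_set)
  then show ?thesis by (simp add: sum_list_sum_nth lessThan_atLeast0)
qed

lemma qbasis_ints: "i < qdim \<Longrightarrow> qbasis!i \<in> \<O> F"
  using qbasis(2) by auto

lemma qbasis_F: "i < qdim \<Longrightarrow> qbasis!i \<in> F"
  using qbasis_ints by auto

lemma qbasis_span: assumes "x \<in> F" obtains r where "x = (\<Sum>i<qdim. of_rat (r i) * qbasis!i)"
proof -
  have "x \<in> Qv.span (set qbasis)" using qbasis(4) assms by auto
  then obtain u where "x = (\<Sum>v\<in>set qbasis. of_rat (u v) * v)"
    unfolding Qv.span_finite[OF finite_set] by auto
  then show ?thesis using that[of "\<lambda>i. u (qbasis!i)"] by (simp add: sum_set_qbasis)
qed

lemma qbasis_independent: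
  assumes "(\<Sum>i<qdim. of_rat (r i) * qbasis!i) = 0" "i < qdim" shows "r i = 0"
proof -
  define u where "u v = r (THE i. i < qdim \<and> qbasis!i = v)" for v
  have u: "u (qbasis!i) = r i" if "i < qdim" for i
  proof -
    have "(THE i'. i' < qdim \<and> qbasis!i' = qbasis!i) = i"
      using that qbasis(1) by (intro the_equality) (auto simp: nth_eq_iff_index_eq)
    then show ?thesis unfolding u_def by simp
  qed
  have "(\<Sum>v\<in>set qbasis. of_rat (u v) * v) = 0" using assms(1) u by (simp add: sum_set_qbasis)
  then have "\<forall>v\<in>set qbasis. u v = 0" using qbasis(3) Qv.dependent_finite[OF finite_set] by auto
  then show ?thesis using u[OF assms(2)] assms(2) by auto
qed

text \<open>Clearing the constant term of a monic equation of \<open>q\<close> exhibits a nonzero rational integer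
  divisible by \<open>q\<close>.\<close>

lemma ex_nonzero_int_dvdO:
  assumes "q \<in> \<O> F" "q \<noteq> 0"
  obtains M :: int where "M \<noteq> 0" "dvdO F q (of_int M)"
proof -
  have "monic p \<Longrightarrow> poly (of_int_poly p) q = 0 \<Longrightarrow> \<exists>M::int. M \<noteq> 0 \<and> dvdO F q (of_int M)" for p
  proof (induction p rule: pCons_induct)
    case (pCons a p)
    have eval: "of_int a + q * poly (of_int_poly p) q = 0"
      using pCons.prems(2) pCons.hyps by (simp add: map_poly_pCons)
    show ?case
    proof (cases "a = 0")
      case False
      have "of_int a = q * (- poly (of_int_poly p) q)" using eval by (simp add: eq_neg_iff_add_eq_0)
      moreover have "- poly (of_int_poly p) q \<in> \<O> F"
        using assms(1) by (auto simp: poly_altdef degree_map_poly)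
      ultimately show ?thesis using False unfolding dvdO_def by blast
    next
      case True
      then have "monic p" "poly (of_int_poly p) q = 0"
        using pCons.prems pCons.hyps eval assms(2) by auto
      then show ?thesis using pCons.IH by blast
    qed
  qed simp
  moreover obtain p where "poly (of_int_poly p) q = 0" "monic p"
    using assms(1) unfolding mem_ints_iff algebraic_int_altdef_ipoly by blast
  ultimately show ?thesis using that by blast
qed

end

locale principal_different = complex_number_field +
  fixes \<delta> :: complex
  assumes different: "different_generator F \<delta>"
begin

lemma delta_ints: "\<delta> \<in> \<O> F" and delta_nonzero: "\<delta> \<noteq> 0"
  using different unfolding different_generator_def by auto

lemma delta_F: "\<delta> \<in> F"
  using delta_ints by auto

lemma inv_different_eq: "inv_different F = {x / \<delta> | x. x \<in> \<O> F}"
  using different unfolding different_generator_def by auto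

text \<open>The definition of \<^const>\<open>embeddings\<close> does not require finiteness. If there were infinitely
  many embeddings, the trace (a sum over them) would vanish identically, so \<open>1/(2\<delta>)\<close> would
  lie in the inverse different and \<open>1/2\<close> would be an algebraic integer.\<close>

lemma finite_embeddings: "finite (embeddings F)"
proof (rule ccontr)
  assume "infinite (embeddings F)"
  then have "trace F x = 0" for x unfolding trace_def by simp
  moreover have "1 / (2 * \<delta>) \<in> F"
    using delta_ints F_add[OF F_1 F_1] by (intro F_divide F_mult) auto
  ultimately have "1 / (2 * \<delta>) \<in> inv_different F" unfolding inv_different_def by auto
  then obtain x where x: "x \<in> \<O> F" "1 / (2 * \<delta>) = x / \<delta>" unfolding inv_different_eq by blast
  then have "x = 1/2" using delta_nonzero by (simp add: field_simps)
  then show False using x(1) half_notin_ints by (simp only:)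
qed

lemma trace_1_nonzero: "trace F 1 \<noteq> 0"
  using finite_embeddings inclusion_mem_embeddings
  by (auto simp: trace_def emb_1 card_gt_0_iff)

lemma trace_ints_mult_Ints: assumes "x \<in> \<O> F" "y \<in> \<O> F" shows "trace F (x * y) \<in> \<int>"
proof -
  have "(\<delta> * x) / \<delta> \<in> inv_different F" unfolding inv_different_eq using assms delta_ints by blast
  then show ?thesis using assms delta_nonzero unfolding inv_different_def by auto
qed

lemma trace_div_delta_mult_Ints:
  assumes "x \<in> \<O> F" "y \<in> \<O> F" shows "trace F (x / \<delta> * y) \<in> \<int>"
proof -
  have "x / \<delta> \<in> inv_different F" unfolding inv_different_eq using assms by blast
  then show ?thesis using assms unfolding inv_different_def by auto
qed

lemma delta_mult_mem_ints:
  assumes "z \<in> F" "\<And>y. y \<in> \<O> F \<Longrightarrow> trace F (z * y) \<in> \<int>" shows "\<delta> * z \<in> \<O> F"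
proof -
  have "z \<in> inv_different F" unfolding inv_different_def using assms by auto
  then obtain x where "x \<in> \<O> F" "z = x / \<delta>" unfolding inv_different_eq by blast
  then show ?thesis using delta_nonzero by simp
qed

definition trace_int :: "complex \<Rightarrow> int" where
  "trace_int z = (SOME k::int. trace F z = of_int k)"

lemma trace_int: assumes "x \<in> \<O> F" "y \<in> \<O> F" shows "trace F (x * y) = of_int (trace_int (x * y))"
proof -
  obtain k :: int where "trace F (x * y) = of_int k"
    using trace_ints_mult_Ints[OF assms] by (elim Ints_cases)
  then show ?thesis unfolding trace_int_def by (metis (mono_tags, lifting) someI_ex)
qed

definition trace_matrix :: "int mat" where
  "trace_matrix = mat qdim qdim (\<lambda>(i,j). trace_int (qbasis!i * qbasis!j))"

lemma trace_matrix_carrier: "trace_matrix \<in> carrier_mat qdim qdim"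
  unfolding trace_matrix_def by simp

lemma trace_matrix_entry:
  "i < qdim \<Longrightarrow> j < qdim \<Longrightarrow> trace F (qbasis!i * qbasis!j) = of_int (trace_matrix $$ (i,j))"
  unfolding trace_matrix_def using trace_int qbasis_ints by simp

lemma trace_matrix_sym: "i < qdim \<Longrightarrow> j < qdim \<Longrightarrow> trace_matrix $$ (i,j) = trace_matrix $$ (j,i)"
  unfolding trace_matrix_def by (simp add: mult.commute)

lemma trace_qbasis_combination_mult:
  assumes "j < qdim"
  shows "trace F ((\<Sum>i<qdim. of_rat (r i) * qbasis!i) * qbasis!j) =
    (\<Sum>i<qdim. of_rat (r i) * of_int (trace_matrix $$ (i,j)))"
proof -
  have "(\<Sum>i<qdim. of_rat (r i) * qbasis!i) * qbasis!j = (\<Sum>i<qdim. of_rat (r i) * (qbasis!i * qbasis!j))"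
    by (simp add: sum_distrib_right mult.assoc)
  also have "trace F \<dots> = (\<Sum>i<qdim. trace F (of_rat (r i) * (qbasis!i * qbasis!j)))"
    using qbasis_F assms by (intro trace_sum) auto
  also have "\<dots> = (\<Sum>i<qdim. of_rat (r i) * of_int (trace_matrix $$ (i,j)))"
    using qbasis_F assms by (intro sum.cong refl) (simp add: trace_rat_mult trace_matrix_entry F_mult)
  finally show ?thesis .
qed

lemma trace_nondegenerate:
  assumes "w \<in> F" "\<And>j. j < qdim \<Longrightarrow> trace F (w * qbasis!j) = 0" shows "w = 0"
proof (rule ccontr)
  assume "w \<noteq> 0"
  obtain r where r: "inverse w = (\<Sum>i<qdim. of_rat (r i) * qbasis!i)"
    using qbasis_span assms(1) F_inverse by metis
  have "w * inverse w = (\<Sum>i<qdim. of_rat (r i) * (w * qbasis!i))"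
    unfolding r by (simp add: sum_distrib_left algebra_simps)
  then have "trace F (w * inverse w) = (\<Sum>i<qdim. trace F (of_rat (r i) * (w * qbasis!i)))"
    using assms(1) qbasis_F by (simp only:) (rule trace_sum, auto)
  also have "\<dots> = 0"
    using assms qbasis_F by (simp add: trace_rat_mult F_mult)
  finally show False using trace_1_nonzero \<open>w \<noteq> 0\<close> by simp
qed

lemma det_trace_matrix_nonzero: "det trace_matrix \<noteq> 0"
proof
  assume det0: "det trace_matrix = 0"
  define TQ :: "rat mat" where "TQ = of_int_hom.mat_hom trace_matrix"
  have TQ: "TQ \<in> carrier_mat qdim qdim" unfolding TQ_def using trace_matrix_carrier by simp
  have "det TQ = 0" unfolding TQ_def of_int_hom.hom_det det0 by simp
  then obtain v where v: "v \<in> carrier_vec qdim" "v \<noteq> 0\<^sub>v qdim" "TQ *\<^sub>v v = 0\<^sub>v qdim"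
    using det_0_iff_vec_prod_zero[OF TQ] by blast
  define y where "y = (\<Sum>i<qdim. of_rat (v$i) * qbasis!i)"
  have yF: "y \<in> F" unfolding y_def using qbasis_F by (intro F_sum F_mult F_of_rat) auto
  have "trace F (y * qbasis!j) = 0" if j: "j < qdim" for j
  proof -
    have "(\<Sum>i<qdim. of_int (trace_matrix $$ (j,i)) * v$i) = (TQ *\<^sub>v v) $ j"
      using j v(1) TQ trace_matrix_carrier unfolding TQ_def by (simp add: scalar_prod_def lessThan_atLeast0)
    also have "\<dots> = 0" using v(3) j by simp
    finally have "of_rat (\<Sum>i<qdim. of_int (trace_matrix $$ (j,i)) * v$i) = (0::complex)" by simp
    then show ?thesis
      unfolding y_def trace_qbasis_combination_mult[OF j]
      by (simp add: of_rat_sum of_rat_mult trace_matrix_sym[OF _ j] mult.commute)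
  qed
  then have "y = 0" using trace_nondegenerate[OF yF] by blast
  then have "v$i = 0" if "i < qdim" for i using qbasis_independent[of "\<lambda>i. v$i"] that unfolding y_def by blast
  then have "v = 0\<^sub>v qdim" using v(1) by (intro eq_vecI) auto
  then show False using v(2) by simp
qed

definition disc :: int where "disc = det trace_matrix"

text \<open>\<open>dual_elem k\<close> is \<^const>\<open>disc\<close> times the trace-dual of the \<open>k\<close>-th basis element.\<close>

definition dual_elem :: "nat \<Rightarrow> complex" where
  "dual_elem k = (\<Sum>i<qdim. of_int (adj_mat trace_matrix $$ (k,i)) * qbasis!i)"

lemma dual_elem_ints: "dual_elem k \<in> \<O> F"
  unfolding dual_elem_def using qbasis_ints by (intro ints_sum ints_mult) auto

lemma trace_dual_elem_mult:
  assumes "k < qdim" "j < qdim"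
  shows "trace F (dual_elem k * qbasis!j) = (if k = j then of_int disc else 0)"
proof -
  have adj: "adj_mat trace_matrix \<in> carrier_mat qdim qdim" using adj_mat(1)[OF trace_matrix_carrier] .
  have "(adj_mat trace_matrix * trace_matrix) $$ (k,j) = (if k = j then disc else 0)"
    using adj_mat(3)[OF trace_matrix_carrier] assms unfolding disc_def by simp
  then have "(\<Sum>i<qdim. adj_mat trace_matrix $$ (k,i) * trace_matrix $$ (i,j)) = (if k = j then disc else 0)"
    using assms adj trace_matrix_carrier by (simp add: scalar_prod_def lessThan_atLeast0)
  moreover have "trace F (dual_elem k * qbasis!j) =
      (\<Sum>i<qdim. of_int (adj_mat trace_matrix $$ (k,i)) * of_int (trace_matrix $$ (i,j)))"
    using trace_qbasis_combination_mult[OF assms(2), of "\<lambda>i. of_int (adj_mat trace_matrix $$ (k,i))"]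
    unfolding dual_elem_def by simp
  ultimately show ?thesis by (simp flip: of_int_mult of_int_sum)
qed

lemma disc_mult_eq_dual_expansion:
  assumes x: "x \<in> \<O> F"
  shows "of_int disc * x = (\<Sum>k<qdim. of_int (trace_int (x * qbasis!k)) * dual_elem k)"
proof -
  define w where "w = of_int disc * x - (\<Sum>k<qdim. of_int (trace_int (x * qbasis!k)) * dual_elem k)"
  have wF: "w \<in> F" unfolding w_def using x dual_elem_ints by (intro F_diff F_mult F_sum F_of_int) auto
  have "trace F (w * qbasis!j) = 0" if j: "j < qdim" for j
  proof -
    have "w * qbasis!j = of_int disc * (x * qbasis!j) -
        (\<Sum>k<qdim. of_int (trace_int (x * qbasis!k)) * (dual_elem k * qbasis!j))"
      unfolding w_def by (simp add: left_diff_distrib sum_distrib_right mult.assoc)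
    then have "trace F (w * qbasis!j) = of_int disc * trace F (x * qbasis!j) -
        (\<Sum>k<qdim. of_int (trace_int (x * qbasis!k)) * trace F (dual_elem k * qbasis!j))"
      using x j qbasis_F dual_elem_ints
      by (simp add: trace_diff trace_int_mult trace_sum F_mult F_sum F_of_int ints_subset)
    also have "\<dots> = of_int disc * of_int (trace_int (x * qbasis!j)) -
        (\<Sum>k<qdim. if k = j then of_int (trace_int (x * qbasis!k)) * of_int disc else 0)"
      using trace_dual_elem_mult j trace_int[OF x qbasis_ints[OF j]]
      by (intro arg_cong2[where f = minus] sum.cong refl) auto
    also have "\<dots> = 0" using j by (simp add: sum.delta)
    finally show ?thesis .
  qed
  then have "w = 0" using trace_nondegenerate[OF wF] by blast
  then show ?thesis unfolding w_def by simp
qed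

text \<open>Two integers are congruent modulo \<open>q\<close> as soon as their trace coordinates agree modulo
  \<open>M \<cdot> disc\<close>, where \<open>q\<close> divides the rational integer \<open>M\<close>.\<close>

lemma finite_residue_ring:
  assumes q: "q \<in> \<O> F" "q \<noteq> 0" shows "finite (\<O> F // congO F q)"
proof -
  obtain M :: int where M: "M \<noteq> 0" "dvdO F q (of_int M)" using ex_nonzero_int_dvdO[OF q] .
  define L where "L = \<bar>M * disc\<bar>"
  have L: "L > 0" unfolding L_def disc_def using M(1) det_trace_matrix_nonzero by simp
  define \<phi> where "\<phi> x = (\<lambda>k\<in>{..<qdim}. trace_int (x * qbasis!k) mod L)" for x
  have \<phi>_range: "\<phi> ` (\<O> F) \<subseteq> PiE {..<qdim} (\<lambda>_. {0..<L})"
    unfolding \<phi>_def using L by (auto simp: PiE_def Pi_def)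
  have \<phi>_eq: "(x, y) \<in> congO F q" if xy: "x \<in> \<O> F" "y \<in> \<O> F" "\<phi> x = \<phi> y" for x y
  proof -
    have "\<exists>z. trace_int (x * qbasis!k) - trace_int (y * qbasis!k) = M * disc * z" if k: "k < qdim" for k
    proof -
      have "M * disc dvd trace_int (x * qbasis!k) - trace_int (y * qbasis!k)"
        using fun_cong[OF xy(3), of k] k unfolding \<phi>_def L_def by (simp add: mod_eq_dvd_iff)
      then show ?thesis by (elim dvdE) blast
    qed
    then obtain z where z: "\<And>k. k < qdim \<Longrightarrow> trace_int (x * qbasis!k) - trace_int (y * qbasis!k) = M * disc * z k"
      by metis
    have "of_int disc * (x - y) = (\<Sum>k<qdim. of_int (trace_int (x * qbasis!k) - trace_int (y * qbasis!k)) * dual_elem k)"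
      using disc_mult_eq_dual_expansion[OF xy(1)] disc_mult_eq_dual_expansion[OF xy(2)]
      by (simp add: sum_subtractf left_diff_distrib right_diff_distrib)
    also have "\<dots> = of_int disc * (of_int M * (\<Sum>k<qdim. of_int (z k) * dual_elem k))"
      using z by (simp add: sum_distrib_left mult.assoc mult.left_commute)
    finally have "x - y = of_int M * (\<Sum>k<qdim. of_int (z k) * dual_elem k)"
      using det_trace_matrix_nonzero unfolding disc_def by simp
    moreover have "(\<Sum>k<qdim. of_int (z k) * dual_elem k) \<in> \<O> F"
      using dual_elem_ints by (intro ints_sum ints_mult) auto
    ultimately show ?thesis using dvdO_mult[OF M(2)] xy by (simp add: mem_congO_iff)
  qed
  have "\<O> F // congO F q \<subseteq> (\<lambda>v. congO F q `` {SOME x. x \<in> \<O> F \<and> \<phi> x = v}) ` PiE {..<qdim} (\<lambda>_. {0..<L})"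
  proof
    fix X assume "X \<in> \<O> F // congO F q"
    then obtain x where x: "x \<in> \<O> F" "X = congO F q `` {x}" by (auto elim: quotientE)
    define x' where "x' = (SOME x'. x' \<in> \<O> F \<and> \<phi> x' = \<phi> x)"
    have x': "x' \<in> \<O> F" "\<phi> x' = \<phi> x" unfolding x'_def using someI_ex[of "\<lambda>x'. x' \<in> \<O> F \<and> \<phi> x' = \<phi> x"] x(1) by auto
    then have "X = congO F q `` {x'}"
      using \<phi>_eq[of x x'] x equiv_class_eq[OF equiv_congO[OF q(1)]] by simp
    then show "X \<in> (\<lambda>v. congO F q `` {SOME x. x \<in> \<O> F \<and> \<phi> x = v}) ` PiE {..<qdim} (\<lambda>_. {0..<L})"
      using x \<phi>_range unfolding x'_def by blast
  qed
  then show ?thesis by (rule finite_subset) (intro finite_imageI finite_PiE, auto)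
qed

end

context complex_number_field
begin

definition residues :: "complex \<Rightarrow> complex set set" where "residues c = \<O> F // congO F c"
definition residue :: "complex \<Rightarrow> complex \<Rightarrow> complex set" where "residue c x = congO F c `` {x}"
definition repr :: "complex set \<Rightarrow> complex" where "repr X = (SOME x. x \<in> X)"
definition unit_mod :: "complex \<Rightarrow> complex \<Rightarrow> bool" where
  "unit_mod c x \<longleftrightarrow> (\<exists>y\<in>\<O> F. dvdO F c (x * y - 1))"
definition inv_mod :: "complex \<Rightarrow> complex \<Rightarrow> complex" where
  "inv_mod c x = (SOME y. y \<in> \<O> F \<and> dvdO F c (x * y - 1))"

lemma residue_mem_residues: "x \<in> \<O> F \<Longrightarrow> residue c x \<in> residues c"
  unfolding residue_def residues_def by (rule quotientI)

lemma residue_eq_iff: assumes "c \<in> \<O> F" "x \<in> \<O> F" "y \<in> \<O> F"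
  shows "residue c x = residue c y \<longleftrightarrow> dvdO F c (x - y)"
proof
  assume "residue c x = residue c y"
  then have "(x, y) \<in> congO F c" unfolding residue_def using equiv_congO[OF assms(1)] assms(3)
    by (rule eq_equiv_class)
  then show "dvdO F c (x - y)" by (simp add: mem_congO_iff)
next
  assume "dvdO F c (x - y)"
  then have "(x, y) \<in> congO F c" using assms by (simp add: mem_congO_iff)
  then show "residue c x = residue c y" unfolding residue_def by (rule equiv_class_eq[OF equiv_congO[OF assms(1)]])
qed

lemma repr_residues: assumes "c \<in> \<O> F" "X \<in> residues c" shows "repr X \<in> \<O> F" "residue c (repr X) = X"
proof -
  obtain x where x: "x \<in> \<O> F" "X = congO F c `` {x}" using assms(2) unfolding residues_def by (auto elim: quotientE)
  have "x \<in> X" using x equiv_class_self[OF equiv_congO[OF assms(1)]] by simp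
  then have r: "repr X \<in> X" unfolding repr_def by (rule someI)
  then have "(x, repr X) \<in> congO F c" using x by simp
  then show "repr X \<in> \<O> F" by (simp add: mem_congO_iff)
  have e: "congO F c `` {x} = congO F c `` {repr X}"
    using equiv_class_eq[OF equiv_congO[OF assms(1)] \<open>(x, repr X) \<in> congO F c\<close>] .
  show "residue c (repr X) = X" by (simp only: residue_def) (rule trans[OF e[symmetric] x(2)[symmetric]])
qed

lemma repr_residue: assumes "c \<in> \<O> F" "x \<in> \<O> F" shows "dvdO F c (repr (residue c x) - x)" "repr (residue c x) \<in> \<O> F"
proof -
  have X: "residue c x \<in> residues c" by (rule residue_mem_residues[OF assms(2)])
  show r: "repr (residue c x) \<in> \<O> F" using repr_residues[OF assms(1) X] by simp
  have "residue c (repr (residue c x)) = residue c x" using repr_residues[OF assms(1) X] by simp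
  then show "dvdO F c (repr (residue c x) - x)" using residue_eq_iff[OF assms(1) r assms(2)] by simp
qed

definition mod_invariant :: "complex \<Rightarrow> (complex \<Rightarrow> 'a) \<Rightarrow> bool" where
  "mod_invariant c \<Phi> \<longleftrightarrow> (\<forall>x\<in>\<O> F. \<forall>y\<in>\<O> F. dvdO F c (x - y) \<longrightarrow> \<Phi> x = \<Phi> y)"

lemma mod_invariantD: "mod_invariant c \<Phi> \<Longrightarrow> x \<in> \<O> F \<Longrightarrow> y \<in> \<O> F \<Longrightarrow> dvdO F c (x - y) \<Longrightarrow> \<Phi> x = \<Phi> y"
  unfolding mod_invariant_def by blast

lemma mod_invariant_repr_residue: assumes "c \<in> \<O> F" "mod_invariant c \<Phi>" "x \<in> \<O> F" shows "\<Phi> (repr (residue c x)) = \<Phi> x"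
  using repr_residue[OF assms(1,3)] assms by (intro mod_invariantD) auto

lemma sum_residues_reindex:
  fixes \<Phi> :: "complex \<Rightarrow> 'a::comm_monoid_add"
  assumes c: "c \<in> \<O> F" and iv: "mod_invariant c \<Phi>"
    and hO: "\<And>x. x \<in> \<O> F \<Longrightarrow> h x \<in> \<O> F"
    and hcong: "\<And>x y. x \<in> \<O> F \<Longrightarrow> y \<in> \<O> F \<Longrightarrow> dvdO F c (x - y) \<Longrightarrow> dvdO F c (h x - h y)"
    and hinj: "\<And>x y. x \<in> \<O> F \<Longrightarrow> y \<in> \<O> F \<Longrightarrow> dvdO F c (h x - h y) \<Longrightarrow> dvdO F c (x - y)"
    and hsurj: "\<And>y. y \<in> \<O> F \<Longrightarrow> \<exists>x\<in>\<O> F. dvdO F c (h x - y)"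
  shows "(\<Sum>X\<in>residues c. \<Phi> (h (repr X))) = (\<Sum>X\<in>residues c. \<Phi> (repr X))"
proof -
  define \<pi> where "\<pi> X = residue c (h (repr X))" for X
  have bij: "bij_betw \<pi> (residues c) (residues c)"
  proof (rule bij_betw_imageI)
    show "inj_on \<pi> (residues c)"
    proof (rule inj_onI)
      fix X Y assume XY: "X \<in> residues c" "Y \<in> residues c" "\<pi> X = \<pi> Y"
      have "dvdO F c (h (repr X) - h (repr Y))"
        using XY(3) unfolding \<pi>_def using residue_eq_iff[OF c] hO repr_residues[OF c] XY(1,2) by auto
      then have "dvdO F c (repr X - repr Y)" using hinj repr_residues[OF c] XY(1,2) by auto
      then have "residue c (repr X) = residue c (repr Y)" using residue_eq_iff[OF c, of "repr X" "repr Y"] repr_residues(1)[OF c] XY(1,2) by blast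
      then show "X = Y" using repr_residues(2)[OF c XY(1)] repr_residues(2)[OF c XY(2)] by simp
    qed
    show "\<pi> ` residues c = residues c"
    proof
      show "\<pi> ` residues c \<subseteq> residues c" unfolding \<pi>_def using residue_mem_residues hO repr_residues[OF c] by auto
      show "residues c \<subseteq> \<pi> ` residues c"
      proof
        fix Y assume Y: "Y \<in> residues c"
        obtain x where x: "x \<in> \<O> F" "dvdO F c (h x - repr Y)" using hsurj repr_residues[OF c Y] by blast
        have r: "repr (residue c x) \<in> \<O> F" "dvdO F c (repr (residue c x) - x)" using repr_residue[OF c x(1)] by auto
        have "dvdO F c (h (repr (residue c x)) - h x)" using hcong[OF r(1) x(1) r(2)] .
        then have "dvdO F c (h (repr (residue c x)) - repr Y)" using x(2) by (rule dvdO_diff_trans)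
        then have "\<pi> (residue c x) = residue c (repr Y)" unfolding \<pi>_def
          by (rule iffD2[OF residue_eq_iff[OF c hO[OF r(1)] repr_residues(1)[OF c Y]]])
        then have "\<pi> (residue c x) = Y" using repr_residues[OF c Y] by simp
        moreover have "residue c x \<in> residues c" using residue_mem_residues[OF x(1)] .
        ultimately show "Y \<in> \<pi> ` residues c" by blast
      qed
    qed
  qed
  have "(\<Sum>X\<in>residues c. \<Phi> (h (repr X))) = (\<Sum>X\<in>residues c. \<Phi> (repr (\<pi> X)))"
    unfolding \<pi>_def using mod_invariant_repr_residue[OF c iv] hO repr_residues[OF c] by (intro sum.cong) auto
  also have "\<dots> = (\<Sum>X\<in>residues c. \<Phi> (repr X))" using sum.reindex_bij_betw[OF bij] .
  finally show ?thesis .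
qed

lemma unit_mod_cong: assumes "c \<in> \<O> F" "x \<in> \<O> F" "x' \<in> \<O> F" "dvdO F c (x - x')" "unit_mod c x" shows "unit_mod c x'"
proof -
  obtain y where y: "y \<in> \<O> F" "dvdO F c (x * y - 1)" using assms(5) unfolding unit_mod_def by blast
  have "x' * y - 1 = (x * y - 1) - (x - x') * y" by (simp add: algebra_simps)
  moreover have "dvdO F c ((x * y - 1) - (x - x') * y)" by (rule dvdO_diff[OF y(2) dvdO_mult[OF assms(4) y(1)]])
  ultimately have "dvdO F c (x' * y - 1)" by (simp only:)
  then show ?thesis unfolding unit_mod_def using y(1) by blast
qed

lemma inv_mod: assumes "unit_mod c x" shows "inv_mod c x \<in> \<O> F" "dvdO F c (x * inv_mod c x - 1)"
proof -
  have "\<exists>y. y \<in> \<O> F \<and> dvdO F c (x * y - 1)" using assms unfolding unit_mod_def by blast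
  then have "inv_mod c x \<in> \<O> F \<and> dvdO F c (x * inv_mod c x - 1)" unfolding inv_mod_def by (rule someI_ex)
  then show "inv_mod c x \<in> \<O> F" "dvdO F c (x * inv_mod c x - 1)" by auto
qed

lemma inv_mod_unique: assumes "x \<in> \<O> F" "y \<in> \<O> F" "y' \<in> \<O> F" "dvdO F c (x * y - 1)" "dvdO F c (x * y' - 1)"
  shows "dvdO F c (y - y')"
proof -
  have "y - y' = y' * (x * y - 1) - y * (x * y' - 1)" by (simp add: algebra_simps)
  moreover have "dvdO F c (y' * (x * y - 1) - y * (x * y' - 1))"
    by (rule dvdO_diff[OF dvdO_mult_left[OF assms(4) assms(3)] dvdO_mult_left[OF assms(5) assms(2)]])
  ultimately show ?thesis by (simp only:)
qed

lemma unit_classes_eq: assumes c: "c \<in> \<O> F" shows "unit_classes F c = {X \<in> residues c. unit_mod c (repr X)}"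
proof
  show "unit_classes F c \<subseteq> {X \<in> residues c. unit_mod c (repr X)}"
  proof
    fix X assume "X \<in> unit_classes F c"
    then obtain x where x: "x \<in> \<O> F" "unit_mod c x" "X = congO F c `` {x}"
      unfolding unit_classes_def unit_mod_def by (auto elim!: quotientE)
    then have X: "X = residue c x" unfolding residue_def by simp
    have "unit_mod c (repr X)" unfolding X
      by (rule unit_mod_cong[OF c x(1) repr_residue(2)[OF c x(1)] dvdO_diff_commute[OF repr_residue(1)[OF c x(1)]] x(2)])
    then show "X \<in> {X \<in> residues c. unit_mod c (repr X)}" using X residue_mem_residues[OF x(1)] by auto
  qed
  show "{X \<in> residues c. unit_mod c (repr X)} \<subseteq> unit_classes F c"
  proof
    fix X assume X: "X \<in> {X \<in> residues c. unit_mod c (repr X)}"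
    then have eqX: "X = congO F c `` {repr X}" "repr X \<in> \<O> F" using repr_residues[OF c] unfolding residue_def by auto
    have m: "repr X \<in> {x \<in> \<O> F. \<exists>y\<in>\<O> F. dvdO F c (x * y - 1)}" using X eqX(2) unfolding unit_mod_def by auto
    have "congO F c `` {repr X} \<in> {x \<in> \<O> F. \<exists>y\<in>\<O> F. dvdO F c (x * y - 1)} // congO F c"
      by (rule quotientI[OF m])
    then show "X \<in> unit_classes F c" unfolding unit_classes_def using eqX(1) by simp
  qed
qed

lemma unit_classesD:
  assumes "c \<in> \<O> F" "X \<in> unit_classes F c"
  shows "X \<in> residues c" "repr X \<in> \<O> F" "unit_mod c (repr X)"
  using assms repr_residues(1) unfolding unit_classes_eq[OF assms(1)] by auto

lemma kloosterman_altdef: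
  "kloosterman F a b c = (\<Sum>X\<in>unit_classes F c. e F ((a * repr X + b * inv_mod c (repr X)) / c))"
  unfolding kloosterman_def repr_def inv_mod_def Let_def by simp

lemma inv_mod_cong: assumes "c \<in> \<O> F" "x \<in> \<O> F" "x' \<in> \<O> F" "dvdO F c (x - x')" "unit_mod c x"
  shows "dvdO F c (inv_mod c x - inv_mod c x')"
proof -
  have u': "unit_mod c x'" using unit_mod_cong[OF assms] .
  note m = inv_mod[OF assms(5)] and m' = inv_mod[OF u']
  have "x' * inv_mod c x - 1 = (x * inv_mod c x - 1) - (x - x') * inv_mod c x" by (simp add: algebra_simps)
  moreover have "dvdO F c ((x * inv_mod c x - 1) - (x - x') * inv_mod c x)"
    by (rule dvdO_diff[OF m(2) dvdO_mult[OF assms(4) m(1)]])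
  ultimately have "dvdO F c (x' * inv_mod c x - 1)" by (simp only:)
  then show ?thesis using inv_mod_unique[OF assms(3) m(1) m'(1) _ m'(2)] by blast
qed

lemma unit_mod_uminus: assumes "unit_mod c x" "x \<in> \<O> F" shows "unit_mod c (- x)" "dvdO F c (inv_mod c (- x) - (- inv_mod c x))"
proof -
  note m = inv_mod[OF assms(1)]
  have "(- x) * (- inv_mod c x) - 1 = x * inv_mod c x - 1" by simp
  then have h: "dvdO F c ((- x) * (- inv_mod c x) - 1)" using m(2) by simp
  show u: "unit_mod c (- x)" unfolding unit_mod_def using h m(1) by blast
  note m' = inv_mod[OF u]
  have "- x \<in> \<O> F" "- inv_mod c x \<in> \<O> F" using assms(2) m(1) by auto
  then show "dvdO F c (inv_mod c (- x) - (- inv_mod c x))" using inv_mod_unique[OF _ m'(1) _ m'(2) h] by blast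
qed

lemma unit_mod_uminus_iff: assumes "x \<in> \<O> F" shows "unit_mod c (- x) \<longleftrightarrow> unit_mod c x"
  using unit_mod_uminus(1)[OF _ assms] unit_mod_uminus(1)[of c "- x"] assms by auto

end

context principal_different
begin

lemma finite_residues: "c \<in> \<O> F \<Longrightarrow> c \<noteq> 0 \<Longrightarrow> finite (residues c)"
  unfolding residues_def by (rule finite_residue_ring)

lemma card_residues_pos: assumes "c \<in> \<O> F" "c \<noteq> 0" shows "card (residues c) > 0"
  using finite_residues[OF assms] residue_mem_residues[OF ints_0, of c] by (auto simp: card_gt_0_iff)

lemma sum_residues_inverse_indicator:
  assumes c: "c \<in> \<O> F" "c \<noteq> 0" and x: "x \<in> \<O> F" and f: "mod_invariant c f"
  shows "(\<Sum>Y\<in>residues c. if dvdO F c (x * repr Y - 1) then f (repr Y) else 0) =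
    (if unit_mod c x then f (inv_mod c x) else 0)"
proof (cases "unit_mod c x")
  case False
  then have "\<not> dvdO F c (x * repr Y - 1)" if "Y \<in> residues c" for Y
    using repr_residues(1)[OF c(1) that] unfolding unit_mod_def by blast
  then show ?thesis using False by simp
next
  case True
  note m = inv_mod[OF True]
  define Y0 where "Y0 = residue c (inv_mod c x)"
  have Y0: "Y0 \<in> residues c" unfolding Y0_def using residue_mem_residues[OF m(1)] .
  have "dvdO F c (x * repr Y - 1) \<longleftrightarrow> Y = Y0" if Y: "Y \<in> residues c" for Y
  proof
    assume "dvdO F c (x * repr Y - 1)"
    then have "dvdO F c (repr Y - inv_mod c x)"
      using inv_mod_unique[OF x repr_residues(1)[OF c(1) Y] m(1)] m(2) by blast
    then show "Y = Y0"
      unfolding Y0_def using residue_eq_iff[OF c(1) repr_residues(1)[OF c(1) Y] m(1)] repr_residues(2)[OF c(1) Y]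
      by simp
  next
    assume "Y = Y0"
    then have d: "dvdO F c (repr Y - inv_mod c x)" unfolding Y0_def using repr_residue[OF c(1) m(1)] by simp
    have eq: "x * repr Y - 1 = x * (repr Y - inv_mod c x) + (x * inv_mod c x - 1)" by (simp add: algebra_simps)
    show "dvdO F c (x * repr Y - 1)" unfolding eq by (rule dvdO_add[OF dvdO_mult_left[OF d x] m(2)])
  qed
  then have "(\<Sum>Y\<in>residues c. if dvdO F c (x * repr Y - 1) then f (repr Y) else 0) =
      (\<Sum>Y\<in>residues c. if Y = Y0 then f (repr Y) else 0)"
    by (intro sum.cong) auto
  also have "\<dots> = f (repr Y0)" using Y0 finite_residues[OF c] by (simp add: sum.delta')
  also have "\<dots> = f (inv_mod c x)" unfolding Y0_def using mod_invariant_repr_residue[OF c(1) f m(1)] .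
  finally show ?thesis using True by simp
qed

end

subsection \<open>Additive characters\<close>

lemma exp_2pi_eq_1_iff: "exp (2 * of_real pi * \<i> * w) = 1 \<longleftrightarrow> w \<in> \<int>"
proof
  define z where "z = 2 * of_real pi * \<i> * w"
  assume exp1: "exp (2 * of_real pi * \<i> * w) = 1"
  then have "exp (Re z) = 1" unfolding z_def by (metis norm_exp_eq_Re norm_one)
  then have Re: "Re z = 0" by simp
  then have "cos (Im z) = 1" using exp1 unfolding z_def by (metis Re_exp exp_zero mult_1 one_complex.sel(1))
  then obtain n :: int where "Im z = of_int n * 2 * pi" using cos_one_2pi_int by blast
  then have "w = of_int n" using Re unfolding z_def by (simp add: complex_eq_iff)
  then show "w \<in> \<int>" by simp
next
  assume "w \<in> \<int>"
  then obtain n :: int where "w = of_int n" by (elim Ints_cases)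
  then show "exp (2 * of_real pi * \<i> * w) = 1" by (simp add: exp_eq_polar cis_conv_exp[symmetric])
qed

context complex_number_field
begin

lemma e_add: "z \<in> F \<Longrightarrow> w \<in> F \<Longrightarrow> e F (z + w) = e F z * e F w"
  unfolding e_def by (simp add: trace_add distrib_left exp_add)

lemma e_eq_1_iff: "e F z = 1 \<longleftrightarrow> trace F z \<in> \<int>"
  unfolding e_def by (rule exp_2pi_eq_1_iff)

end

context principal_different
begin

text \<open>\<open>\<psi> c\<close> is an additive character of \<open>\<O>/c\<O>\<close>: since \<open>\<delta>\<close> generates the different, it is
  trivial exactly on \<open>c\<O>\<close>.\<close>

definition \<psi> :: "complex \<Rightarrow> complex \<Rightarrow> complex" where "\<psi> c t = e F (t / (\<delta> * c))"

lemma psi_add: assumes "c \<in> F" "a \<in> F" "b \<in> F" shows "\<psi> c (a + b) = \<psi> c a * \<psi> c b"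
proof -
  have "(a + b) / (\<delta> * c) = a / (\<delta> * c) + b / (\<delta> * c)" by (simp add: add_divide_distrib)
  then show ?thesis unfolding \<psi>_def using assms delta_F by (simp add: e_add F_divide F_mult)
qed

lemma psi_eq_1_if_dvdO: assumes "c \<in> \<O> F" "c \<noteq> 0" "dvdO F c t" shows "\<psi> c t = 1"
proof -
  obtain k where k: "k \<in> \<O> F" "t = c * k" using assms(3) unfolding dvdO_def by blast
  have "t / (\<delta> * c) = k / \<delta> * 1" using k assms(2) delta_nonzero by simp
  then have "trace F (t / (\<delta> * c)) \<in> \<int>" using trace_div_delta_mult_Ints[OF k(1) ints_1] by simp
  then show ?thesis unfolding \<psi>_def by (simp add: e_eq_1_iff)
qed

lemma psi_cong: assumes "c \<in> \<O> F" "c \<noteq> 0" "a \<in> \<O> F" "b \<in> \<O> F" "dvdO F c (a - b)"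
  shows "\<psi> c a = \<psi> c b"
proof -
  have "\<psi> c a = \<psi> c ((a - b) + b)" by simp
  also have "\<dots> = \<psi> c (a - b) * \<psi> c b" using assms by (intro psi_add) auto
  also have "\<psi> c (a - b) = 1" using psi_eq_1_if_dvdO assms by blast
  finally show ?thesis by simp
qed

lemma psi_mult_cancel: assumes "c = d * c'" "d \<noteq> 0" shows "\<psi> c (d * t) = \<psi> c' t"
  unfolding \<psi>_def using assms by (simp add: field_simps)

lemma ex_psi_ne_1: assumes "c \<in> \<O> F" "c \<noteq> 0" "s \<in> \<O> F" "\<not> dvdO F c s"
  shows "\<exists>a\<in>\<O> F. \<psi> c (s * a) \<noteq> 1"
proof (rule ccontr)
  assume "\<not> (\<exists>a\<in>\<O> F. \<psi> c (s * a) \<noteq> 1)"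
  then have all: "\<psi> c (s * a) = 1" if "a \<in> \<O> F" for a using that by blast
  have zF: "s / (\<delta> * c) \<in> F" using assms delta_F by auto
  have "trace F (s / (\<delta> * c) * y) \<in> \<int>" if "y \<in> \<O> F" for y
  proof -
    have "e F (s * y / (\<delta> * c)) = 1" using all[OF that] unfolding \<psi>_def .
    then have "trace F (s * y / (\<delta> * c)) \<in> \<int>" by (simp add: e_eq_1_iff)
    then show ?thesis by (simp add: mult.commute mult.left_commute)
  qed
  then have "\<delta> * (s / (\<delta> * c)) \<in> \<O> F" using delta_mult_mem_ints[OF zF] by blast
  then have "s / c \<in> \<O> F" using delta_nonzero by simp
  moreover have "s = c * (s / c)" using assms(2) by simp
  ultimately have "dvdO F c s" unfolding dvdO_def by blast
  then show False using assms(4) by simp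
qed

lemma mod_invariant_psi: assumes "c \<in> \<O> F" "c \<noteq> 0" "s \<in> \<O> F" shows "mod_invariant c (\<lambda>t. \<psi> c (s * t))"
  unfolding mod_invariant_def
proof (intro ballI impI)
  fix x y assume xy: "x \<in> \<O> F" "y \<in> \<O> F" "dvdO F c (x - y)"
  have "dvdO F c (s * x - s * y)" using dvdO_mult_left[OF xy(3) assms(3)] by (simp add: algebra_simps)
  then show "\<psi> c (s * x) = \<psi> c (s * y)" using assms xy by (intro psi_cong) auto
qed

lemma sum_residues_psi: assumes c: "c \<in> \<O> F" "c \<noteq> 0" and s: "s \<in> \<O> F"
  shows "(\<Sum>X\<in>residues c. \<psi> c (s * repr X)) = (if dvdO F c s then of_nat (card (residues c)) else 0)"
proof (cases "dvdO F c s")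
  case True
  have "\<psi> c (s * repr X) = 1" if "X \<in> residues c" for X
    using c True repr_residues[OF c(1) that] by (intro psi_eq_1_if_dvdO dvdO_mult) auto
  then show ?thesis using True by simp
next
  case False
  obtain a where a: "a \<in> \<O> F" "\<psi> c (s * a) \<noteq> 1" using ex_psi_ne_1[OF c s False] by blast
  have "(\<Sum>X\<in>residues c. \<psi> c (s * (repr X + a))) = (\<Sum>X\<in>residues c. \<psi> c (s * repr X))"
  proof (rule sum_residues_reindex[OF c(1) mod_invariant_psi[OF c s], where h = "\<lambda>x. x + a"])
    show "\<And>x. x \<in> \<O> F \<Longrightarrow> x + a \<in> \<O> F" using a by auto
    show "\<And>x y. dvdO F c (x - y) \<Longrightarrow> dvdO F c (x + a - (y + a))" by simp
    show "\<And>x y. dvdO F c (x + a - (y + a)) \<Longrightarrow> dvdO F c (x - y)" by simp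
    show "\<And>y. y \<in> \<O> F \<Longrightarrow> \<exists>x\<in>\<O> F. dvdO F c (x + a - y)"
      using a dvdO_0 by (intro bexI[of _ "y - a" for y]) auto
  qed
  moreover have "\<psi> c (s * (repr X + a)) = \<psi> c (s * a) * \<psi> c (s * repr X)" if "X \<in> residues c" for X
    using repr_residues[OF c(1) that] a s c by (simp add: distrib_left psi_add ints_subset ints_mult mult.commute)
  ultimately have "\<psi> c (s * a) * (\<Sum>X\<in>residues c. \<psi> c (s * repr X)) = (\<Sum>X\<in>residues c. \<psi> c (s * repr X))"
    by (simp add: sum_distrib_left)
  then have "(\<psi> c (s * a) - 1) * (\<Sum>X\<in>residues c. \<psi> c (s * repr X)) = 0" by (simp add: algebra_simps)
  then show ?thesis using False a(2) by simp
qed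

lemma mod_invariant_unit_twist:
  assumes c: "c \<in> \<O> F" "c \<noteq> 0" and k: "k \<in> \<O> F"
  shows "mod_invariant c (\<lambda>x. if unit_mod c x then \<psi> c (x + k * inv_mod c x) else 0)"
  unfolding mod_invariant_def
proof (intro ballI impI)
  fix x y assume xy: "x \<in> \<O> F" "y \<in> \<O> F" "dvdO F c (x - y)"
  have unit_iff: "unit_mod c x \<longleftrightarrow> unit_mod c y"
    using unit_mod_cong[OF c(1) xy] unit_mod_cong[OF c(1) xy(2,1) dvdO_diff_commute[OF xy(3)]] by blast
  show "(if unit_mod c x then \<psi> c (x + k * inv_mod c x) else 0) =
      (if unit_mod c y then \<psi> c (y + k * inv_mod c y) else 0)"
  proof (cases "unit_mod c x")
    case True
    have eq: "(x + k * inv_mod c x) - (y + k * inv_mod c y) = (x - y) + k * (inv_mod c x - inv_mod c y)"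
      by (simp add: algebra_simps)
    have "dvdO F c ((x + k * inv_mod c x) - (y + k * inv_mod c y))"
      unfolding eq by (rule dvdO_add[OF xy(3) dvdO_mult_left[OF inv_mod_cong[OF c(1) xy True] k]])
    then have "\<psi> c (x + k * inv_mod c x) = \<psi> c (y + k * inv_mod c y)"
      using c xy k inv_mod(1) True unit_iff by (intro psi_cong) auto
    then show ?thesis using True unit_iff by simp
  qed (use unit_iff in simp)
qed

lemma sum_unit_classes_psi_uminus:
  assumes c: "c \<in> \<O> F" "c \<noteq> 0" and k: "k \<in> \<O> F"
  shows "(\<Sum>X\<in>unit_classes F c. \<psi> c (- repr X - k * inv_mod c (repr X))) =
    (\<Sum>X\<in>unit_classes F c. \<psi> c (repr X + k * inv_mod c (repr X)))"
proof -
  define G where "G = (\<lambda>x. if unit_mod c x then \<psi> c (x + k * inv_mod c x) else 0)"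
  have G_uminus: "G (- x) = (if unit_mod c x then \<psi> c (- x - k * inv_mod c x) else 0)"
    if x: "x \<in> \<O> F" for x
  proof (cases "unit_mod c x")
    case True
    note n = unit_mod_uminus[OF True x]
    have eq: "(- x + k * inv_mod c (- x)) - (- x - k * inv_mod c x) = k * (inv_mod c (- x) - - inv_mod c x)"
      by (simp add: algebra_simps)
    have "dvdO F c ((- x + k * inv_mod c (- x)) - (- x - k * inv_mod c x))"
      unfolding eq by (rule dvdO_mult_left[OF n(2) k])
    then show ?thesis
      unfolding G_def using True n(1) c x k inv_mod(1)[OF True] inv_mod(1)[OF n(1)] by (auto intro!: psi_cong)
  qed (simp add: G_def unit_mod_uminus_iff[OF x])
  have fin: "finite (residues c)" using finite_residues[OF c] .
  have "(\<Sum>X\<in>unit_classes F c. \<psi> c (- repr X - k * inv_mod c (repr X))) =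
      (\<Sum>X\<in>residues c. if unit_mod c (repr X) then \<psi> c (- repr X - k * inv_mod c (repr X)) else 0)"
    unfolding unit_classes_eq[OF c(1)] using fin by (simp add: sum.inter_filter)
  also have "\<dots> = (\<Sum>X\<in>residues c. G (- repr X))"
    using G_uminus repr_residues(1)[OF c(1)] by (intro sum.cong refl) auto
  also have "\<dots> = (\<Sum>X\<in>residues c. G (repr X))"
  proof (rule sum_residues_reindex[OF c(1) mod_invariant_unit_twist[OF c k, folded G_def]])
    show "\<And>x y. dvdO F c (x - y) \<Longrightarrow> dvdO F c (- x - - y)"
      and "\<And>x y. dvdO F c (- x - - y) \<Longrightarrow> dvdO F c (x - y)"
      using dvdO_uminus by fastforce+
    show "\<And>y. y \<in> \<O> F \<Longrightarrow> \<exists>x\<in>\<O> F. dvdO F c (- x - y)"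
      using dvdO_0 by (intro bexI[of _ "- y" for y]) auto
  qed auto
  also have "\<dots> = (\<Sum>X\<in>unit_classes F c. \<psi> c (repr X + k * inv_mod c (repr X)))"
    unfolding unit_classes_eq[OF c(1)] G_def using fin by (simp add: sum.inter_filter)
  finally show ?thesis .
qed

definition solution_sum :: "complex \<Rightarrow> complex \<Rightarrow> complex \<Rightarrow> complex \<Rightarrow> complex" where
  "solution_sum c \<nu> \<mu> t = (\<Sum>X\<in>residues c. if dvdO F c (t * repr X + \<mu>) then \<psi> c (\<nu> * repr X) else 0)"

lemma psi_product_swap:
  assumes "c \<in> F" "t \<in> F" "x \<in> F" "y \<in> F" "\<mu> \<in> F"
  shows "\<psi> c (- t) * \<psi> c ((t * x + \<mu>) * y) = \<psi> c (\<mu> * y) * \<psi> c ((x * y - 1) * t)"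
proof -
  have "\<psi> c (- t) * \<psi> c ((t * x + \<mu>) * y) = \<psi> c (- t + (t * x + \<mu>) * y)"
    using assms by (intro psi_add[symmetric]) auto
  also have "- t + (t * x + \<mu>) * y = \<mu> * y + (x * y - 1) * t" by (simp add: algebra_simps)
  also have "\<psi> c \<dots> = \<psi> c (\<mu> * y) * \<psi> c ((x * y - 1) * t)" using assms by (intro psi_add) auto
  finally show ?thesis .
qed

text \<open>Both sides are obtained by detecting the congruence with the orthogonality relation and
  exchanging the two sums over residues.\<close>

lemma sum_residues_psi_solutions:
  assumes c: "c \<in> \<O> F" "c \<noteq> 0" and x: "x \<in> \<O> F" and \<mu>: "\<mu> \<in> \<O> F"
  shows "(\<Sum>T\<in>residues c. \<psi> c (- repr T) * (if dvdO F c (repr T * x + \<mu>) then 1 else 0)) =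
    (\<Sum>Y\<in>residues c. if dvdO F c (x * repr Y - 1) then \<psi> c (\<mu> * repr Y) else 0)"
proof -
  define N where "N = (of_nat (card (residues c)) :: complex)"
  have indicator: "(if dvdO F c s then 1 else 0) = (\<Sum>X\<in>residues c. \<psi> c (s * repr X)) / N"
    if "s \<in> \<O> F" for s
    using sum_residues_psi[OF c that] card_residues_pos[OF c] unfolding N_def by simp
  have repr: "\<And>X. X \<in> residues c \<Longrightarrow> repr X \<in> \<O> F" using repr_residues(1)[OF c(1)] .
  have "(\<Sum>T\<in>residues c. \<psi> c (- repr T) * (if dvdO F c (repr T * x + \<mu>) then 1 else 0)) =
      (\<Sum>T\<in>residues c. \<Sum>Y\<in>residues c. \<psi> c (\<mu> * repr Y) * \<psi> c ((x * repr Y - 1) * repr T) / N)"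
  proof (intro sum.cong refl)
    fix T assume T: "T \<in> residues c"
    have "\<psi> c (- repr T) * (if dvdO F c (repr T * x + \<mu>) then 1 else 0) =
        (\<Sum>Y\<in>residues c. \<psi> c (- repr T) * \<psi> c ((repr T * x + \<mu>) * repr Y) / N)"
      using repr[OF T] x \<mu> by (subst indicator) (auto simp: sum_distrib_left sum_divide_distrib)
    also have "\<dots> = (\<Sum>Y\<in>residues c. \<psi> c (\<mu> * repr Y) * \<psi> c ((x * repr Y - 1) * repr T) / N)"
      using repr T x \<mu> c by (intro sum.cong refl) (simp add: psi_product_swap ints_subset)
    finally show "\<psi> c (- repr T) * (if dvdO F c (repr T * x + \<mu>) then 1 else 0) = \<dots>" .
  qed
  also have "\<dots> = (\<Sum>Y\<in>residues c. \<psi> c (\<mu> * repr Y) * ((\<Sum>T\<in>residues c. \<psi> c ((x * repr Y - 1) * repr T)) / N))"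
    by (subst sum.swap) (simp add: sum_distrib_left sum_divide_distrib)
  also have "\<dots> = (\<Sum>Y\<in>residues c. \<psi> c (\<mu> * repr Y) * (if dvdO F c (x * repr Y - 1) then 1 else 0))"
  proof (intro sum.cong refl)
    fix Y assume "Y \<in> residues c"
    then have "x * repr Y - 1 \<in> \<O> F" using repr x by auto
    then show "\<psi> c (\<mu> * repr Y) * ((\<Sum>T\<in>residues c. \<psi> c ((x * repr Y - 1) * repr T)) / N) =
        \<psi> c (\<mu> * repr Y) * (if dvdO F c (x * repr Y - 1) then 1 else 0)"
      by (simp only: indicator)
  qed
  also have "\<dots> = (\<Sum>Y\<in>residues c. if dvdO F c (x * repr Y - 1) then \<psi> c (\<mu> * repr Y) else 0)"
    by (intro sum.cong refl) simp
  finally show ?thesis .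
qed

lemma kloosterman_double_sum:
  assumes c: "c \<in> \<O> F" "c \<noteq> 0" and \<nu>: "\<nu> \<in> \<O> F" and \<mu>: "\<mu> \<in> \<O> F"
  shows "kloosterman F (\<nu> / \<delta>) (\<mu> / \<delta>) c =
    (\<Sum>T\<in>residues c. \<psi> c (- repr T) * solution_sum c \<nu> \<mu> (repr T))"
proof -
  have repr: "\<And>X. X \<in> residues c \<Longrightarrow> repr X \<in> \<O> F" using repr_residues(1)[OF c(1)] .
  have "(\<Sum>T\<in>residues c. \<psi> c (- repr T) * solution_sum c \<nu> \<mu> (repr T)) =
      (\<Sum>X\<in>residues c. \<psi> c (\<nu> * repr X) *
         (\<Sum>T\<in>residues c. \<psi> c (- repr T) * (if dvdO F c (repr T * repr X + \<mu>) then 1 else 0)))"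
    unfolding solution_sum_def sum_distrib_left
    by (subst sum.swap) (intro sum.cong refl, simp)
  also have "\<dots> = (\<Sum>X\<in>residues c. \<psi> c (\<nu> * repr X) *
      (if unit_mod c (repr X) then \<psi> c (\<mu> * inv_mod c (repr X)) else 0))"
    using repr \<mu>
    by (intro sum.cong refl)
      (simp add: sum_residues_psi_solutions[OF c] sum_residues_inverse_indicator[OF c _ mod_invariant_psi[OF c \<mu>]])
  also have "\<dots> = (\<Sum>X\<in>unit_classes F c. \<psi> c (\<nu> * repr X) * \<psi> c (\<mu> * inv_mod c (repr X)))"
    unfolding unit_classes_eq[OF c(1)] using finite_residues[OF c]
    by (simp add: sum.inter_filter if_distrib cong: if_cong)
  also have "\<dots> = (\<Sum>X\<in>unit_classes F c. \<psi> c (\<nu> * repr X + \<mu> * inv_mod c (repr X)))"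
  proof (intro sum.cong refl psi_add[symmetric])
    fix X assume "X \<in> unit_classes F c"
    note U = unit_classesD[OF c(1) this]
    show "c \<in> F" "\<nu> * repr X \<in> F" "\<mu> * inv_mod c (repr X) \<in> F"
      using c(1) \<nu> \<mu> U(2) inv_mod(1)[OF U(3)] by (auto intro!: ints_subset)
  qed
  also have "\<dots> = kloosterman F (\<nu> / \<delta>) (\<mu> / \<delta>) c"
    unfolding kloosterman_altdef \<psi>_def using delta_nonzero c(2)
    by (intro sum.cong refl) (simp add: field_simps)
  finally show ?thesis by simp
qed

subsection \<open>Principal divisors of a product of prime elements\<close>

definition ideal2 :: "complex \<Rightarrow> complex \<Rightarrow> complex set" where
  "ideal2 a b = {a * x + b * y | x y. x \<in> \<O> F \<and> y \<in> \<O> F}"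

definition ideal_gen :: "complex set \<Rightarrow> complex" where
  "ideal_gen I = (SOME d. d \<in> \<O> F \<and> I = principal_ideal F d)"

definition principal_divisors :: "complex \<Rightarrow> complex set set" where
  "principal_divisors c = {principal_ideal F d | d. d \<in> \<O> F \<and> d \<noteq> 0 \<and> dvdO F d c}"

lemma mem_principal_ideal_iff: "x \<in> principal_ideal F d \<longleftrightarrow> dvdO F d x"
  unfolding principal_ideal_def dvdO_def by auto

lemma principal_ideal_eq_iff: assumes "a \<in> \<O> F" "b \<in> \<O> F"
  shows "principal_ideal F a = principal_ideal F b \<longleftrightarrow> dvdO F a b \<and> dvdO F b a"
proof
  assume eq: "principal_ideal F a = principal_ideal F b"
  have "b \<in> principal_ideal F b" using dvdO_refl[OF assms(2)] by (simp add: mem_principal_ideal_iff)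
  then have "b \<in> principal_ideal F a" using eq by simp
  then have 1: "dvdO F a b" by (simp add: mem_principal_ideal_iff)
  have "a \<in> principal_ideal F a" using dvdO_refl[OF assms(1)] by (simp add: mem_principal_ideal_iff)
  then have "a \<in> principal_ideal F b" using eq by simp
  then have 2: "dvdO F b a" by (simp add: mem_principal_ideal_iff)
  show "dvdO F a b \<and> dvdO F b a" using 1 2 by simp
next
  assume "dvdO F a b \<and> dvdO F b a"
  then show "principal_ideal F a = principal_ideal F b"
    unfolding set_eq_iff mem_principal_ideal_iff using dvdO_trans[of a b] dvdO_trans[of b a] by blast
qed

lemma ideal_gen_props: assumes "d \<in> \<O> F" "I = principal_ideal F d"
  shows "ideal_gen I \<in> \<O> F" "principal_ideal F (ideal_gen I) = I"
proof -
  have "\<exists>d. d \<in> \<O> F \<and> I = principal_ideal F d" using assms by blast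
  then have "ideal_gen I \<in> \<O> F \<and> I = principal_ideal F (ideal_gen I)" unfolding ideal_gen_def by (rule someI_ex)
  then show "ideal_gen I \<in> \<O> F" "principal_ideal F (ideal_gen I) = I" by auto
qed

lemma ideal_gen_dvdO_iff: assumes "d \<in> \<O> F" "I = principal_ideal F d"
  shows "dvdO F (ideal_gen I) x \<longleftrightarrow> dvdO F d x"
proof -
  have "dvdO F (ideal_gen I) d \<and> dvdO F d (ideal_gen I)"
    using ideal_gen_props[OF assms] assms principal_ideal_eq_iff[of "ideal_gen I" d] by simp
  then show ?thesis using dvdO_trans[of "ideal_gen I" d x] dvdO_trans[of d "ideal_gen I" x] by blast
qed

lemma ideal_gen_nonzero: assumes "d \<in> \<O> F" "I = principal_ideal F d" "d \<noteq> 0" shows "ideal_gen I \<noteq> 0"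
proof
  assume "ideal_gen I = 0"
  then have "dvdO F 0 d" using ideal_gen_dvdO_iff[OF assms(1,2), of d] dvdO_refl[OF assms(1)] by simp
  then show False using assms(3) by (simp add: dvdO_0_left_iff)
qed

text \<open>\<open>\<O>/p\<O>\<close> is finite and multiplication by \<open>t \<notin> p\<O>\<close> is injective on it, hence surjective.\<close>

lemma unit_mod_prime_elemO:
  assumes p: "prime_elemO F p" and t: "t \<in> \<O> F" "\<not> dvdO F p t"
  shows "unit_mod p t"
proof -
  have pO: "p \<in> \<O> F" "p \<noteq> 0" using p unfolding prime_elemO_def by auto
  have repr: "\<And>X. X \<in> residues p \<Longrightarrow> repr X \<in> \<O> F" using repr_residues(1)[OF pO(1)] .
  define f where "f X = residue p (t * repr X)" for X
  have sub: "f ` residues p \<subseteq> residues p"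
    unfolding f_def using repr t by (auto intro!: residue_mem_residues)
  have "inj_on f (residues p)"
  proof (rule inj_onI)
    fix X Y assume XY: "X \<in> residues p" "Y \<in> residues p" "f X = f Y"
    have tr: "t * repr X \<in> \<O> F" "t * repr Y \<in> \<O> F" using repr XY t by auto
    have "dvdO F p (t * repr X - t * repr Y)" using XY(3) residue_eq_iff[OF pO(1) tr] unfolding f_def by blast
    then have "dvdO F p (t * (repr X - repr Y))" by (simp add: algebra_simps)
    then have "dvdO F p (repr X - repr Y)" using p t repr XY unfolding prime_elemO_def by blast
    then show "X = Y"
      using residue_eq_iff[OF pO(1) repr[OF XY(1)] repr[OF XY(2)]] repr_residues(2)[OF pO(1)] XY(1,2) by metis
  qed
  then have "f ` residues p = residues p" using endo_inj_surj[OF finite_residues[OF pO] sub] by blast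
  then obtain X where X: "X \<in> residues p" "f X = residue p 1"
    using residue_mem_residues[OF ints_1] by (metis imageE)
  have "dvdO F p (t * repr X - 1)"
    using X(2) residue_eq_iff[OF pO(1) _ ints_1] repr[OF X(1)] t unfolding f_def by blast
  then show ?thesis using repr[OF X(1)] unfolding unit_mod_def by blast
qed

lemma prod_list_primes: assumes "\<forall>p\<in>set ps. prime_elemO F p" shows "prod_list ps \<in> \<O> F" "prod_list ps \<noteq> 0"
  using assms by (induction ps) (auto simp: prime_elemO_def)

lemma bezout_prod_primes:
  assumes "\<forall>p\<in>set ps. prime_elemO F p" "t \<in> \<O> F"
  shows "\<exists>d a b. d \<in> \<O> F \<and> d \<noteq> 0 \<and> dvdO F d (prod_list ps) \<and> dvdO F d t \<and>
    a \<in> \<O> F \<and> b \<in> \<O> F \<and> d = a * t + b * prod_list ps"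
  using assms
proof (induction ps arbitrary: t)
  case Nil
  have "1 \<in> \<O> F \<and> (1::complex) \<noteq> 0 \<and> dvdO F 1 (prod_list []) \<and> dvdO F 1 t \<and>
      0 \<in> \<O> F \<and> 1 \<in> \<O> F \<and> (1::complex) = 0 * t + 1 * prod_list []"
    using Nil(2) by (auto simp: dvdO_def)
  then show ?case by blast
next
  case (Cons p ps)
  have p: "prime_elemO F p" and ps: "\<forall>p\<in>set ps. prime_elemO F p" using Cons.prems by auto
  have pO: "p \<in> \<O> F" "p \<noteq> 0" using p unfolding prime_elemO_def by auto
  have P: "prod_list ps \<in> \<O> F" using prod_list_primes(1)[OF ps] .
  show ?case
  proof (cases "dvdO F p t")
    case False
    obtain u where u: "u \<in> \<O> F" "dvdO F p (t * u - 1)"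
      using unit_mod_prime_elemO[OF p Cons.prems(2) False] unfolding unit_mod_def by blast
    then obtain v where v: "v \<in> \<O> F" "t * u - 1 = p * v" unfolding dvdO_def by blast
    obtain d a b where d: "d \<in> \<O> F" "d \<noteq> 0" "dvdO F d (prod_list ps)" "dvdO F d t"
      "a \<in> \<O> F" "b \<in> \<O> F" "d = a * t + b * prod_list ps"
      using Cons.IH[OF ps Cons.prems(2)] by blast
    have "t * u - p * v = 1" using v(2) by (simp add: field_simps)
    then have "d = a * t + b * prod_list ps * (t * u - p * v)" using d(7) by simp
    then have "d = (a + b * prod_list ps * u) * t + (- b * v) * prod_list (p # ps)"
      by (simp add: algebra_simps)
    moreover have "dvdO F d (prod_list (p # ps))" using dvdO_mult_left[OF d(3) pO(1)] by simp
    moreover have "a + b * prod_list ps * u \<in> \<O> F" "- b * v \<in> \<O> F" using d u v P by auto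
    ultimately have "d \<in> \<O> F \<and> d \<noteq> 0 \<and> dvdO F d (prod_list (p # ps)) \<and> dvdO F d t \<and>
        a + b * prod_list ps * u \<in> \<O> F \<and> - b * v \<in> \<O> F \<and>
        d = (a + b * prod_list ps * u) * t + (- b * v) * prod_list (p # ps)"
      using d(1,2,4) by blast
    then show ?thesis by blast
  next
    case True
    obtain t' where t': "t' \<in> \<O> F" "t = p * t'" using True unfolding dvdO_def by blast
    obtain d a b where d: "d \<in> \<O> F" "d \<noteq> 0" "dvdO F d (prod_list ps)" "dvdO F d t'"
      "a \<in> \<O> F" "b \<in> \<O> F" "d = a * t' + b * prod_list ps"
      using Cons.IH[OF ps t'(1)] by blast
    have "p * d = a * t + b * prod_list (p # ps)" using d(7) t'(2) by (simp add: algebra_simps)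
    moreover have "dvdO F (p * d) (prod_list (p # ps))" using d(3) unfolding dvdO_def by (auto simp: mult.assoc)
    moreover have "dvdO F (p * d) t" using d(4) t'(2) unfolding dvdO_def by (auto simp: mult.assoc)
    moreover have "p * d \<in> \<O> F" "p * d \<noteq> 0" using d pO by auto
    ultimately have "p * d \<in> \<O> F \<and> p * d \<noteq> 0 \<and> dvdO F (p * d) (prod_list (p # ps)) \<and>
        dvdO F (p * d) t \<and> a \<in> \<O> F \<and> b \<in> \<O> F \<and> p * d = a * t + b * prod_list (p # ps)"
      using d(5,6) by blast
    then show ?thesis by blast
  qed
qed

lemma ideal2_cong: assumes "c \<in> \<O> F" "t \<in> \<O> F" "t' \<in> \<O> F" "dvdO F c (t - t')" shows "ideal2 t c = ideal2 t' c"
proof -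
  have sub: "ideal2 t c \<subseteq> ideal2 t' c" if h: "t \<in> \<O> F" "t' \<in> \<O> F" "dvdO F c (t - t')" for t t'
  proof
    fix z assume "z \<in> ideal2 t c"
    then obtain x y where xy: "x \<in> \<O> F" "y \<in> \<O> F" "z = t * x + c * y" unfolding ideal2_def by blast
    obtain k where k: "k \<in> \<O> F" "t - t' = c * k" using h(3) unfolding dvdO_def by blast
    have "t = t' + c * k" using k(2) by (simp add: algebra_simps)
    then have "z = t' * x + c * (k * x + y)" using xy(3) by (simp add: algebra_simps)
    moreover have "k * x + y \<in> \<O> F" using k xy by auto
    ultimately show "z \<in> ideal2 t' c" unfolding ideal2_def using xy by blast
  qed
  show ?thesis using sub[OF assms(2,3,4)] sub[OF assms(3,2) dvdO_diff_commute[OF assms(4)]] by blast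
qed

lemma ideal2_eq_principal:
  assumes "d \<in> \<O> F" "t \<in> \<O> F" "c \<in> \<O> F" "dvdO F d c" "dvdO F d t"
    "a \<in> \<O> F" "b \<in> \<O> F" "d = a * t + b * c"
  shows "ideal2 t c = principal_ideal F d"
proof
  show "ideal2 t c \<subseteq> principal_ideal F d"
  proof
    fix z assume "z \<in> ideal2 t c"
    then obtain x y where xy: "x \<in> \<O> F" "y \<in> \<O> F" "z = t * x + c * y" unfolding ideal2_def by blast
    have "dvdO F d (t * x + c * y)" using assms(4,5) xy by (intro dvdO_add dvdO_mult)
    then show "z \<in> principal_ideal F d" using xy(3) by (simp add: mem_principal_ideal_iff)
  qed
  show "principal_ideal F d \<subseteq> ideal2 t c"
  proof
    fix z assume "z \<in> principal_ideal F d"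
    then obtain k where k: "k \<in> \<O> F" "z = d * k" unfolding principal_ideal_def by blast
    have "z = t * (a * k) + c * (b * k)" using k(2) assms(8) by (simp add: algebra_simps)
    moreover have "a * k \<in> \<O> F" "b * k \<in> \<O> F" using assms k by auto
    ultimately show "z \<in> ideal2 t c" unfolding ideal2_def by blast
  qed
qed

lemma ideal2_mult_unit:
  assumes "d \<in> \<O> F" "c' \<in> \<O> F" "c = d * c'" "r \<in> \<O> F" "unit_mod c' r"
  shows "ideal2 (d * r) c = principal_ideal F d"
proof -
  obtain s where s: "s \<in> \<O> F" "dvdO F c' (r * s - 1)" using assms(5) unfolding unit_mod_def by blast
  obtain k where k: "k \<in> \<O> F" "r * s - 1 = c' * k" using s(2) unfolding dvdO_def by blast
  have "d = s * (d * r) + (- k) * c" using k(2) assms(3) by (simp add: algebra_simps)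
  moreover have "dvdO F d c" using assms unfolding dvdO_def by blast
  moreover have "dvdO F d (d * r)" using assms unfolding dvdO_def by blast
  ultimately show ?thesis using assms s k by (intro ideal2_eq_principal[where a = s and b = "- k"]) auto
qed

lemma principal_divisorsD: assumes "I \<in> principal_divisors c" "c \<in> \<O> F"
  shows "ideal_gen I \<in> \<O> F" "ideal_gen I \<noteq> 0" "dvdO F (ideal_gen I) c" "principal_ideal F (ideal_gen I) = I"
    "c / ideal_gen I \<in> \<O> F" "c = ideal_gen I * (c / ideal_gen I)"
proof -
  obtain d where d: "d \<in> \<O> F" "d \<noteq> 0" "dvdO F d c" "I = principal_ideal F d"
    using assms(1) unfolding principal_divisors_def by blast
  show g: "ideal_gen I \<in> \<O> F" "principal_ideal F (ideal_gen I) = I" using ideal_gen_props[OF d(1,4)] by auto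
  show nz: "ideal_gen I \<noteq> 0" using ideal_gen_nonzero[OF d(1,4,2)] .
  show dv: "dvdO F (ideal_gen I) c" using ideal_gen_dvdO_iff[OF d(1,4)] d(3) by simp
  then obtain k where k: "k \<in> \<O> F" "c = ideal_gen I * k" unfolding dvdO_def by blast
  then have "c / ideal_gen I = k" using nz by simp
  then show "c / ideal_gen I \<in> \<O> F" "c = ideal_gen I * (c / ideal_gen I)" using k by auto
qed

lemma finite_principal_divisors: assumes c: "c \<in> \<O> F" "c \<noteq> 0" shows "finite (principal_divisors c)"
proof -
  have "principal_divisors c \<subseteq> (\<lambda>T. ideal2 (repr T) c) ` residues c"
  proof
    fix I assume "I \<in> principal_divisors c"
    then obtain d where d: "d \<in> \<O> F" "d \<noteq> 0" "dvdO F d c" "I = principal_ideal F d"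
      unfolding principal_divisors_def by blast
    have "ideal2 d c = principal_ideal F d"
      using d c dvdO_refl[OF d(1)] by (intro ideal2_eq_principal[where a = 1 and b = 0]) auto
    also have "ideal2 d c = ideal2 (repr (residue c d)) c"
      by (rule ideal2_cong[OF c(1) d(1) repr_residue(2)[OF c(1) d(1)] dvdO_diff_commute[OF repr_residue(1)[OF c(1) d(1)]]])
    finally have "I = ideal2 (repr (residue c d)) c" using d(4) by simp
    then show "I \<in> (\<lambda>T. ideal2 (repr T) c) ` residues c" using residue_mem_residues[OF d(1)] by blast
  qed
  then show ?thesis by (rule finite_surj[OF finite_residues[OF c]])
qed

lemma gcd_decomposition_exists:
  assumes ps: "\<forall>p\<in>set ps. prime_elemO F p" and c: "c = prod_list ps" and T: "T \<in> residues c"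
  obtains I X where "I \<in> principal_divisors c" "X \<in> unit_classes F (c / ideal_gen I)"
    "residue c (ideal_gen I * repr X) = T"
proof -
  have cO: "c \<in> \<O> F" using prod_list_primes(1)[OF ps] c by simp
  define t where "t = repr T"
  have t: "t \<in> \<O> F" unfolding t_def using repr_residues(1)[OF cO T] .
  obtain d0 a b where d0: "d0 \<in> \<O> F" "d0 \<noteq> 0" "dvdO F d0 c" "dvdO F d0 t"
    "a \<in> \<O> F" "b \<in> \<O> F" "d0 = a * t + b * c"
    using bezout_prod_primes[OF ps t] c by blast
  define I where "I = principal_ideal F d0"
  have I: "I \<in> principal_divisors c" unfolding I_def principal_divisors_def using d0 by blast
  note D = principal_divisorsD[OF I cO]
  define d where "d = ideal_gen I"
  define c' where "c' = c / d"
  have c': "c' \<in> \<O> F" "c = d * c'" using D(5,6) unfolding c'_def d_def by auto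
  have ideal: "ideal2 t c = principal_ideal F d"
    using ideal2_eq_principal[OF d0(1) t cO d0(3-7)] D(4) unfolding I_def d_def by simp
  have "t \<in> ideal2 t c" unfolding ideal2_def using t by (intro CollectI exI[of _ 1] exI[of _ 0]) auto
  then have "dvdO F d t" using ideal by (simp add: mem_principal_ideal_iff)
  then obtain r where r: "r \<in> \<O> F" "t = d * r" unfolding dvdO_def by blast
  have "d \<in> ideal2 t c" using ideal dvdO_refl D(1) unfolding d_def by (simp add: mem_principal_ideal_iff)
  then obtain x y where xy: "x \<in> \<O> F" "y \<in> \<O> F" "d = t * x + c * y" unfolding ideal2_def by blast
  have "d * 1 = d * (r * x + c' * y)" using xy(3) r(2) c'(2) by (simp add: algebra_simps)
  then have "1 = r * x + c' * y" using D(2) unfolding d_def by simp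
  then have "r * x - 1 = c' * (- y)" by (simp add: algebra_simps)
  then have r_unit: "unit_mod c' r" unfolding unit_mod_def dvdO_def using xy by blast
  define X where "X = residue c' r"
  have rX: "dvdO F c' (repr X - r)" "repr X \<in> \<O> F" unfolding X_def using repr_residue[OF c'(1) r(1)] by auto
  have "X \<in> unit_classes F c'"
    unfolding unit_classes_eq[OF c'(1)] X_def
    using residue_mem_residues[OF r(1)] unit_mod_cong[OF c'(1) r(1) rX(2) dvdO_diff_commute[OF rX(1)] r_unit]
    unfolding X_def by simp
  moreover have "residue c (d * repr X) = T"
  proof -
    have "dvdO F c (d * (repr X - r))" by (rule dvdO_mult_factor[OF c'(2) rX(1)])
    then have "dvdO F c (d * repr X - t)" using r(2) by (simp add: algebra_simps)
    then have "residue c (d * repr X) = residue c t"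
      using D(1) rX(2) t unfolding d_def by (subst residue_eq_iff[OF cO]) auto
    then show ?thesis unfolding t_def using repr_residues(2)[OF cO T] by simp
  qed
  ultimately show ?thesis using that I unfolding c'_def d_def by blast
qed

lemma gcd_decomposition_unique:
  assumes c: "c \<in> \<O> F" and I: "I \<in> principal_divisors c" "I' \<in> principal_divisors c"
    and X: "X \<in> unit_classes F (c / ideal_gen I)" "X' \<in> unit_classes F (c / ideal_gen I')"
    and eq: "residue c (ideal_gen I * repr X) = residue c (ideal_gen I' * repr X')"
  shows "I = I'" "X = X'"
proof -
  note D = principal_divisorsD[OF I(1) c] and D' = principal_divisorsD[OF I(2) c]
  note U = unit_classesD[OF D(5) X(1)] and U' = unit_classesD[OF D'(5) X(2)]
  have z: "ideal_gen I * repr X \<in> \<O> F" "ideal_gen I' * repr X' \<in> \<O> F" using D D' U U' by auto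
  have dz: "dvdO F c (ideal_gen I * repr X - ideal_gen I' * repr X')"
    using eq residue_eq_iff[OF c z] by simp
  have "I = principal_ideal F (ideal_gen I)" using D(4) by simp
  also have "\<dots> = ideal2 (ideal_gen I * repr X) c"
    using D U by (intro ideal2_mult_unit[symmetric]) auto
  also have "\<dots> = ideal2 (ideal_gen I' * repr X') c" using ideal2_cong[OF c z dz] .
  also have "\<dots> = principal_ideal F (ideal_gen I')" using D' U' by (intro ideal2_mult_unit) auto
  also have "\<dots> = I'" using D'(4) .
  finally show II: "I = I'" .
  have U2: "X' \<in> residues (c / ideal_gen I)" "repr X' \<in> \<O> F" using U' II by auto
  have "dvdO F c (ideal_gen I * (repr X - repr X'))" using dz II by (simp add: right_diff_distrib)
  then have "dvdO F (c / ideal_gen I) (repr X - repr X')" using dvdO_cancel_factor D(2,6) by blast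
  then have "residue (c / ideal_gen I) (repr X) = residue (c / ideal_gen I) (repr X')"
    using residue_eq_iff[OF D(5) U(2) U2(2)] by blast
  then show "X = X'" using repr_residues(2)[OF D(5) U(1)] repr_residues(2)[OF D(5) U2(1)] by simp
qed

text \<open>Grouping residues \<open>t\<close> modulo \<open>c\<close> by the ideal \<open>(t, c) = (d)\<close>: then \<open>t = d x\<close> with \<open>x\<close> a
  unit modulo \<open>c/d\<close>, determined modulo \<open>c/d\<close>. The ideal is principal since \<open>c\<close> is a product of
  prime elements.\<close>

lemma sum_residues_by_gcd:
  fixes \<Phi> :: "complex \<Rightarrow> 'a::comm_monoid_add"
  assumes ps: "\<forall>p\<in>set ps. prime_elemO F p" and c: "c = prod_list ps" and \<Phi>: "mod_invariant c \<Phi>"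
  shows "(\<Sum>T\<in>residues c. \<Phi> (repr T)) =
    (\<Sum>I\<in>principal_divisors c. \<Sum>X\<in>unit_classes F (c / ideal_gen I). \<Phi> (ideal_gen I * repr X))"
proof -
  have cO: "c \<in> \<O> F" "c \<noteq> 0" using prod_list_primes[OF ps] c by auto
  define S where "S = Sigma (principal_divisors c) (\<lambda>I. unit_classes F (c / ideal_gen I))"
  define \<pi> where "\<pi> = (\<lambda>(I, X). residue c (ideal_gen I * repr X))"
  have mem: "ideal_gen I * repr X \<in> \<O> F"
    if "I \<in> principal_divisors c" "X \<in> unit_classes F (c / ideal_gen I)" for I X
    using principal_divisorsD(1,5)[OF that(1) cO(1)] unit_classesD(2) that(2) by blast
  have fin: "finite (unit_classes F (c / ideal_gen I))" if "I \<in> principal_divisors c" for I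
  proof -
    note D = principal_divisorsD[OF that cO(1)]
    have "c / ideal_gen I \<noteq> 0" using D(6) cO(2) by auto
    then show ?thesis using finite_residues[OF D(5)] unfolding unit_classes_eq[OF D(5)] by simp
  qed
  have "bij_betw \<pi> S (residues c)"
  proof (rule bij_betw_imageI)
    show "inj_on \<pi> S"
      unfolding inj_on_def S_def \<pi>_def using gcd_decomposition_unique[OF cO(1)] by auto
    show "\<pi> ` S = residues c"
    proof
      show "\<pi> ` S \<subseteq> residues c" using mem unfolding \<pi>_def S_def by (auto intro: residue_mem_residues)
      show "residues c \<subseteq> \<pi> ` S"
      proof
        fix T assume "T \<in> residues c"
        then obtain I X where "I \<in> principal_divisors c" "X \<in> unit_classes F (c / ideal_gen I)"
          "residue c (ideal_gen I * repr X) = T"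
          using gcd_decomposition_exists[OF ps c] by blast
        then show "T \<in> \<pi> ` S" unfolding S_def \<pi>_def by force
      qed
    qed
  qed
  then have "(\<Sum>T\<in>residues c. \<Phi> (repr T)) = (\<Sum>p\<in>S. \<Phi> (repr (\<pi> p)))"
    by (rule sum.reindex_bij_betw[of _ _ _ "\<lambda>T. \<Phi> (repr T)", symmetric])
  also have "\<dots> = (\<Sum>(I, X)\<in>S. \<Phi> (ideal_gen I * repr X))"
    using mem mod_invariant_repr_residue[OF cO(1) \<Phi>] unfolding \<pi>_def S_def by (intro sum.cong refl) auto
  also have "\<dots> = (\<Sum>I\<in>principal_divisors c. \<Sum>X\<in>unit_classes F (c / ideal_gen I). \<Phi> (ideal_gen I * repr X))"
    unfolding S_def using finite_principal_divisors[OF cO] fin by (subst sum.Sigma) auto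
  finally show ?thesis .
qed


lemma bij_betw_coset_residues:
  assumes O: "c \<in> \<O> F" "c' \<in> \<O> F" "d \<in> \<O> F" and cd: "c = c' * d" and c': "c' \<noteq> 0"
    and x0: "x0 \<in> \<O> F"
  shows "bij_betw (\<lambda>Z. residue c (x0 + c' * repr Z)) (residues d) {X \<in> residues c. dvdO F c' (repr X - x0)}"
proof (rule bij_betw_imageI)
  let ?\<pi> = "\<lambda>Z. residue c (x0 + c' * repr Z)"
  have z: "x0 + c' * repr Z \<in> \<O> F" if "Z \<in> residues d" for Z
    using O x0 repr_residues(1)[OF O(3) that] by auto
  show "inj_on ?\<pi> (residues d)"
  proof (rule inj_onI)
    fix Z Z' assume Z: "Z \<in> residues d" "Z' \<in> residues d" "?\<pi> Z = ?\<pi> Z'"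
    have "dvdO F c ((x0 + c' * repr Z) - (x0 + c' * repr Z'))"
      using Z(3) residue_eq_iff[OF O(1) z[OF Z(1)] z[OF Z(2)]] by blast
    then have "dvdO F c (c' * (repr Z - repr Z'))" by (simp add: algebra_simps)
    then have "dvdO F d (repr Z - repr Z')" by (rule dvdO_cancel_factor[OF c' cd])
    then have "residue d (repr Z) = residue d (repr Z')"
      using residue_eq_iff[OF O(3) repr_residues(1)[OF O(3) Z(1)] repr_residues(1)[OF O(3) Z(2)]] by blast
    then show "Z = Z'" using repr_residues(2)[OF O(3) Z(1)] repr_residues(2)[OF O(3) Z(2)] by simp
  qed
  have c'c: "dvdO F c' c" using cd O unfolding dvdO_def by blast
  show "?\<pi> ` residues d = {X \<in> residues c. dvdO F c' (repr X - x0)}"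
  proof
    show "?\<pi> ` residues d \<subseteq> {X \<in> residues c. dvdO F c' (repr X - x0)}"
    proof
      fix X assume "X \<in> ?\<pi> ` residues d"
      then obtain Z where Z: "Z \<in> residues d" and X: "X = ?\<pi> Z" by blast
      have r: "dvdO F c (repr (?\<pi> Z) - (x0 + c' * repr Z))" using repr_residue[OF O(1) z[OF Z]] by auto
      have "dvdO F c' ((repr (?\<pi> Z) - (x0 + c' * repr Z)) + c' * repr Z)"
        using dvdO_trans[OF c'c r] dvdO_mult[OF dvdO_refl[OF O(2)] repr_residues(1)[OF O(3) Z]] by (rule dvdO_add)
      then show "X \<in> {X \<in> residues c. dvdO F c' (repr X - x0)}"
        using residue_mem_residues[OF z[OF Z]] X by simp
    qed
    show "{X \<in> residues c. dvdO F c' (repr X - x0)} \<subseteq> ?\<pi> ` residues d"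
    proof clarify
      fix X assume X: "X \<in> residues c" "dvdO F c' (repr X - x0)"
      obtain w where w: "w \<in> \<O> F" "repr X - x0 = c' * w" using X(2) unfolding dvdO_def by blast
      define Z where "Z = residue d w"
      have Z: "Z \<in> residues d" unfolding Z_def using residue_mem_residues[OF w(1)] .
      have "dvdO F c (c' * (repr Z - w))"
        using dvdO_mult_factor[OF cd] repr_residue(1)[OF O(3) w(1)] unfolding Z_def by blast
      moreover have "c' * (repr Z - w) = (x0 + c' * repr Z) - repr X" using w(2) by (simp add: algebra_simps)
      ultimately have "?\<pi> Z = residue c (repr X)"
        using residue_eq_iff[OF O(1) z[OF Z] repr_residues(1)[OF O(1) X(1)]] by simp
      then show "X \<in> ?\<pi> ` residues d" using repr_residues(2)[OF O(1) X(1)] Z by force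
    qed
  qed
qed

lemma sum_residues_coset:
  fixes \<Phi> :: "complex \<Rightarrow> 'a::comm_monoid_add"
  assumes O: "c \<in> \<O> F" "c' \<in> \<O> F" "d \<in> \<O> F" and cd: "c = c' * d" and nz: "c' \<noteq> 0" "d \<noteq> 0"
    and x0: "x0 \<in> \<O> F" and \<Phi>: "mod_invariant c \<Phi>"
  shows "(\<Sum>X\<in>residues c. if dvdO F c' (repr X - x0) then \<Phi> (repr X) else 0) =
    (\<Sum>Z\<in>residues d. \<Phi> (x0 + c' * repr Z))"
proof -
  have "c \<noteq> 0" using cd nz by simp
  then have "(\<Sum>X\<in>residues c. if dvdO F c' (repr X - x0) then \<Phi> (repr X) else 0) =
      (\<Sum>X\<in>{X \<in> residues c. dvdO F c' (repr X - x0)}. \<Phi> (repr X))"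
    using finite_residues[OF O(1)] by (simp add: sum.inter_filter)
  also have "\<dots> = (\<Sum>Z\<in>residues d. \<Phi> (repr (residue c (x0 + c' * repr Z))))"
    by (rule sum.reindex_bij_betw[OF bij_betw_coset_residues[OF O cd nz(1) x0],
        of "\<lambda>X. \<Phi> (repr X)", symmetric])
  also have "\<dots> = (\<Sum>Z\<in>residues d. \<Phi> (x0 + c' * repr Z))"
  proof (intro sum.cong refl mod_invariant_repr_residue[OF O(1) \<Phi>])
    fix Z assume "Z \<in> residues d"
    then show "x0 + c' * repr Z \<in> \<O> F" using O x0 repr_residues(1)[OF O(3)] by auto
  qed
  finally show ?thesis .
qed

lemma linear_congruence_iff:
  assumes "d \<noteq> 0" "c = d * c'" and u: "u \<in> \<O> F" "unit_mod c' u" and \<mu>': "\<mu>' \<in> \<O> F"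
    and x: "x \<in> \<O> F"
  shows "dvdO F c (d * u * x + d * \<mu>') \<longleftrightarrow> dvdO F c' (x + inv_mod c' u * \<mu>')"
proof -
  note m = inv_mod[OF u(2)]
  have "d * u * x + d * \<mu>' = d * (u * x + \<mu>')" by (simp add: algebra_simps)
  then have "dvdO F c (d * u * x + d * \<mu>') \<longleftrightarrow> dvdO F c' (u * x + \<mu>')"
    using dvdO_cancel_factor[OF assms(1,2)] dvdO_mult_factor[OF assms(2)] by metis
  also have "\<dots> \<longleftrightarrow> dvdO F c' (x + inv_mod c' u * \<mu>')"
  proof
    assume h: "dvdO F c' (u * x + \<mu>')"
    have eq: "x + inv_mod c' u * \<mu>' = inv_mod c' u * (u * x + \<mu>') - (u * inv_mod c' u - 1) * x"
      by (simp add: algebra_simps)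
    show "dvdO F c' (x + inv_mod c' u * \<mu>')"
      unfolding eq by (rule dvdO_diff[OF dvdO_mult_left[OF h m(1)] dvdO_mult[OF m(2) x]])
  next
    assume h: "dvdO F c' (x + inv_mod c' u * \<mu>')"
    have eq: "u * x + \<mu>' = u * (x + inv_mod c' u * \<mu>') - (u * inv_mod c' u - 1) * \<mu>'"
      by (simp add: algebra_simps)
    show "dvdO F c' (u * x + \<mu>')"
      unfolding eq by (rule dvdO_diff[OF dvdO_mult_left[OF h u(1)] dvdO_mult[OF m(2) \<mu>']])
  qed
  finally show ?thesis .
qed

lemma solution_sum_eq_0:
  assumes "c \<in> \<O> F" "dvdO F d c" "dvdO F d t" "\<not> dvdO F d \<mu>"
  shows "solution_sum c \<nu> \<mu> t = 0"
proof -
  have "\<not> dvdO F c (t * repr X + \<mu>)" if "X \<in> residues c" for X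
  proof
    assume "dvdO F c (t * repr X + \<mu>)"
    then have "dvdO F d ((t * repr X + \<mu>) - t * repr X)"
      using dvdO_diff[OF dvdO_trans[OF assms(2)] dvdO_mult[OF assms(3) repr_residues(1)[OF assms(1) that]]]
      by blast
    then show False using assms(4) by simp
  qed
  then show ?thesis unfolding solution_sum_def by simp
qed

text \<open>The solutions of \<open>d u x \<equiv> -\<mu> (mod c)\<close> form a residue class modulo \<open>c' = c/d\<close>, which splits
  into \<open>N(d)\<close> classes modulo \<open>c\<close>; summing the character over them kills the sum unless \<open>d | \<nu>\<close>.\<close>

lemma solution_sum_unit_multiple:
  assumes c: "c \<in> \<O> F" "c \<noteq> 0" and d: "d \<in> \<O> F" "d \<noteq> 0" and c': "c' \<in> \<O> F" "c = d * c'"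
    and u: "u \<in> \<O> F" "unit_mod c' u" and \<nu>: "\<nu> \<in> \<O> F" and \<mu>: "\<mu> \<in> \<O> F"
  shows "solution_sum c \<nu> \<mu> (d * u) = (if dvdO F d \<nu> \<and> dvdO F d \<mu>
    then of_nat (card (residues d)) * \<psi> c' (- (\<nu> / d) * (\<mu> / d) * inv_mod c' u) else 0)"
proof (cases "dvdO F d \<mu>")
  case False
  have "dvdO F d c" using c' unfolding dvdO_def by blast
  then show ?thesis
    using solution_sum_eq_0[OF c(1) _ dvdO_mult[OF dvdO_refl[OF d(1)] u(1)] False] False by simp
next
  case True
  obtain \<mu>' where \<mu>': "\<mu>' \<in> \<O> F" "\<mu> = d * \<mu>'" using True unfolding dvdO_def by blast
  define x0 where "x0 = - (inv_mod c' u * \<mu>')"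
  have x0: "x0 \<in> \<O> F" unfolding x0_def using inv_mod(1)[OF u(2)] \<mu>' by auto
  have c'0: "c' \<noteq> 0" using c c' by auto
  have "solution_sum c \<nu> \<mu> (d * u) = (\<Sum>X\<in>residues c. if dvdO F c' (repr X - x0) then \<psi> c (\<nu> * repr X) else 0)"
    unfolding solution_sum_def x0_def \<mu>'(2) using linear_congruence_iff[OF d(2) c'(2) u \<mu>'(1)]
    by (intro sum.cong refl) (simp add: repr_residues(1)[OF c(1)] mult.assoc)
  also have "\<dots> = (\<Sum>Z\<in>residues d. \<psi> c (\<nu> * (x0 + c' * repr Z)))"
    using sum_residues_coset[OF c(1) c'(1) d(1) _ c'0 d(2) x0 mod_invariant_psi[OF c \<nu>]] c'(2)
    by (simp add: mult.commute)
  also have "\<dots> = (\<Sum>Z\<in>residues d. \<psi> c (\<nu> * x0) * \<psi> d (\<nu> * repr Z))"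
  proof (intro sum.cong refl)
    fix Z assume Z: "Z \<in> residues d"
    have "\<psi> c (\<nu> * (x0 + c' * repr Z)) = \<psi> c (\<nu> * x0 + c' * (\<nu> * repr Z))" by (simp add: algebra_simps)
    also have "\<dots> = \<psi> c (\<nu> * x0) * \<psi> c (c' * (\<nu> * repr Z))"
      using c \<nu> x0 c' repr_residues(1)[OF d(1) Z] by (intro psi_add) auto
    also have "\<psi> c (c' * (\<nu> * repr Z)) = \<psi> d (\<nu> * repr Z)"
      using c'(2) c'0 by (intro psi_mult_cancel) (simp add: mult.commute)
    finally show "\<psi> c (\<nu> * (x0 + c' * repr Z)) = \<psi> c (\<nu> * x0) * \<psi> d (\<nu> * repr Z)" .
  qed
  also have "\<dots> = \<psi> c (\<nu> * x0) * (if dvdO F d \<nu> then of_nat (card (residues d)) else 0)"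
    by (simp add: sum_distrib_left[symmetric] sum_residues_psi[OF d \<nu>])
  also have "\<dots> = (if dvdO F d \<nu> \<and> dvdO F d \<mu>
      then of_nat (card (residues d)) * \<psi> c' (- (\<nu> / d) * (\<mu> / d) * inv_mod c' u) else 0)"
  proof (cases "dvdO F d \<nu>")
    case True
    then obtain \<nu>' where \<nu>': "\<nu> = d * \<nu>'" unfolding dvdO_def by blast
    have "\<psi> c (\<nu> * x0) = \<psi> c' (\<nu>' * x0)"
      using psi_mult_cancel[OF c'(2) d(2)] \<nu>' by (simp add: mult.assoc)
    also have "\<nu>' * x0 = - (\<nu> / d) * (\<mu> / d) * inv_mod c' u"
      unfolding x0_def using \<nu>' \<mu>'(2) d(2) by (simp add: field_simps)
    finally show ?thesis using True \<open>dvdO F d \<mu>\<close> by simp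
  qed simp
  finally show ?thesis .
qed

lemma mod_invariant_solution_sum:
  assumes c: "c \<in> \<O> F" "c \<noteq> 0"
  shows "mod_invariant c (\<lambda>t. \<psi> c (- t) * solution_sum c \<nu> \<mu> t)"
  unfolding mod_invariant_def
proof (intro ballI impI)
  fix t t' assume t: "t \<in> \<O> F" "t' \<in> \<O> F" "dvdO F c (t - t')"
  have "\<psi> c (- t) = \<psi> c (- t')" using c t dvdO_uminus[OF t(3)] by (intro psi_cong) auto
  moreover have "dvdO F c (t * x + \<mu>) \<longleftrightarrow> dvdO F c (t' * x + \<mu>)" if "x \<in> \<O> F" for x
  proof -
    have eq: "(t * x + \<mu>) - (t' * x + \<mu>) = (t - t') * x" by (simp add: algebra_simps)
    have d: "dvdO F c ((t * x + \<mu>) - (t' * x + \<mu>))" unfolding eq by (rule dvdO_mult[OF t(3) that])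
    show ?thesis
    proof
      assume "dvdO F c (t * x + \<mu>)"
      from dvdO_diff[OF this d] show "dvdO F c (t' * x + \<mu>)" by (simp add: add.commute)
    next
      assume "dvdO F c (t' * x + \<mu>)"
      from dvdO_add[OF d this] show "dvdO F c (t * x + \<mu>)" by simp
    qed
  qed
  then have "solution_sum c \<nu> \<mu> t = solution_sum c \<nu> \<mu> t'"
    unfolding solution_sum_def using repr_residues(1)[OF c(1)] by (intro sum.cong refl) auto
  ultimately show "\<psi> c (- t) * solution_sum c \<nu> \<mu> t = \<psi> c (- t') * solution_sum c \<nu> \<mu> t'" by simp
qed

lemma ideal_norm_eq_card_residues: "ideal_norm F d = card (residues d)"
  unfolding ideal_norm_def residues_def ..

lemma sum_unit_classes_divisor_term:
  assumes c: "c \<in> \<O> F" "c \<noteq> 0" and d: "d \<in> \<O> F" "d \<noteq> 0" and c': "c' \<in> \<O> F" "c = d * c'"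
    and \<nu>: "\<nu> \<in> \<O> F" and \<mu>: "\<mu> \<in> \<O> F"
  shows "(\<Sum>X\<in>unit_classes F c'. \<psi> c (- (d * repr X)) * solution_sum c \<nu> \<mu> (d * repr X)) =
    (if dvdO F d \<nu> \<and> dvdO F d \<mu>
     then of_nat (ideal_norm F d) * kloosterman F (1 / \<delta>) (\<nu> * \<mu> / (\<delta> * d\<^sup>2)) c' else 0)"
proof (cases "dvdO F d \<nu> \<and> dvdO F d \<mu>")
  case False
  have summand: "\<psi> c (- (d * repr X)) * solution_sum c \<nu> \<mu> (d * repr X) = 0"
    if "X \<in> unit_classes F c'" for X
    using solution_sum_unit_multiple[OF c d c' unit_classesD(2,3)[OF c'(1) that] \<nu> \<mu>] False by simp
  have "(\<Sum>X\<in>unit_classes F c'. \<psi> c (- (d * repr X)) * solution_sum c \<nu> \<mu> (d * repr X)) = 0"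
    using summand by (intro sum.neutral) blast
  then show ?thesis using False by auto
next
  case True
  have c'0: "c' \<noteq> 0" using c c' by auto
  define k where "k = (\<nu> / d) * (\<mu> / d)"
  have k: "k \<in> \<O> F" using True d unfolding k_def dvdO_def by auto
  have summand: "\<psi> c (- (d * repr X)) * solution_sum c \<nu> \<mu> (d * repr X) =
      of_nat (card (residues d)) * \<psi> c' (- repr X - k * inv_mod c' (repr X))"
    if X: "X \<in> unit_classes F c'" for X
  proof -
    note U = unit_classesD[OF c'(1) X]
    have F: "c' \<in> F" "- repr X \<in> F" "- (k * inv_mod c' (repr X)) \<in> F"
      using ints_subset[OF c'(1)] ints_subset[OF ints_uminus[OF U(2)]]
        ints_subset[OF ints_uminus[OF ints_mult[OF k inv_mod(1)[OF U(3)]]]] by auto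
    have "\<psi> c (- (d * repr X)) = \<psi> c' (- repr X)"
      using psi_mult_cancel[OF c'(2) d(2), of "- repr X"] by simp
    moreover have "\<psi> c' (- repr X) * \<psi> c' (- (k * inv_mod c' (repr X))) =
        \<psi> c' (- repr X - k * inv_mod c' (repr X))"
      using psi_add[OF F] by simp
    moreover have "- (\<nu> / d) * (\<mu> / d) * inv_mod c' (repr X) = - (k * inv_mod c' (repr X))"
      unfolding k_def by simp
    ultimately show ?thesis
      using True solution_sum_unit_multiple[OF c d c' U(2,3) \<nu> \<mu>] by (simp add: mult_ac)
  qed
  have "(\<Sum>X\<in>unit_classes F c'. \<psi> c (- (d * repr X)) * solution_sum c \<nu> \<mu> (d * repr X)) =
      of_nat (card (residues d)) * (\<Sum>X\<in>unit_classes F c'. \<psi> c' (- repr X - k * inv_mod c' (repr X)))"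
    using summand by (simp add: sum_distrib_left)
  also have "\<dots> = of_nat (card (residues d)) * (\<Sum>X\<in>unit_classes F c'. \<psi> c' (repr X + k * inv_mod c' (repr X)))"
    using sum_unit_classes_psi_uminus[OF c'(1) c'0 k] by simp
  also have "(\<Sum>X\<in>unit_classes F c'. \<psi> c' (repr X + k * inv_mod c' (repr X))) =
      kloosterman F (1 / \<delta>) (\<nu> * \<mu> / (\<delta> * d\<^sup>2)) c'"
    unfolding kloosterman_altdef \<psi>_def k_def using delta_nonzero c'0 d(2)
    by (intro sum.cong refl) (simp add: field_simps power2_eq_square)
  finally show ?thesis using True by (simp add: ideal_norm_eq_card_residues)
qed

lemma kloosterman_sum_over_divisors:
  assumes ps: "\<forall>p\<in>set ps. prime_elemO F p" and q: "q = prod_list ps"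
    and \<nu>: "\<nu> \<in> \<O> F" and \<mu>: "\<mu> \<in> \<O> F"
  shows "kloosterman F (\<nu> / \<delta>) (\<mu> / \<delta>) q =
    (\<Sum>I\<in>{I \<in> principal_divisors q. dvdO F (ideal_gen I) \<nu> \<and> dvdO F (ideal_gen I) \<mu>}.
       of_nat (ideal_norm F (ideal_gen I)) *
       kloosterman F (1 / \<delta>) (\<nu> * \<mu> / (\<delta> * (ideal_gen I)\<^sup>2)) (q / ideal_gen I))"
proof -
  have qO: "q \<in> \<O> F" "q \<noteq> 0" using prod_list_primes[OF ps] q by auto
  have "kloosterman F (\<nu> / \<delta>) (\<mu> / \<delta>) q = (\<Sum>T\<in>residues q. \<psi> q (- repr T) * solution_sum q \<nu> \<mu> (repr T))"
    using kloosterman_double_sum[OF qO \<nu> \<mu>] .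
  also have "\<dots> = (\<Sum>I\<in>principal_divisors q. \<Sum>X\<in>unit_classes F (q / ideal_gen I).
      \<psi> q (- (ideal_gen I * repr X)) * solution_sum q \<nu> \<mu> (ideal_gen I * repr X))"
    using sum_residues_by_gcd[OF ps q mod_invariant_solution_sum[OF qO]] .
  also have "\<dots> = (\<Sum>I\<in>principal_divisors q. if dvdO F (ideal_gen I) \<nu> \<and> dvdO F (ideal_gen I) \<mu>
      then of_nat (ideal_norm F (ideal_gen I)) *
        kloosterman F (1 / \<delta>) (\<nu> * \<mu> / (\<delta> * (ideal_gen I)\<^sup>2)) (q / ideal_gen I) else 0)"
    using principal_divisorsD[OF _ qO(1)] qO \<nu> \<mu>
    by (intro sum.cong refl sum_unit_classes_divisor_term) auto
  also have "\<dots> = (\<Sum>I\<in>{I \<in> principal_divisors q. dvdO F (ideal_gen I) \<nu> \<and> dvdO F (ideal_gen I) \<mu>}.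
      of_nat (ideal_norm F (ideal_gen I)) *
      kloosterman F (1 / \<delta>) (\<nu> * \<mu> / (\<delta> * (ideal_gen I)\<^sup>2)) (q / ideal_gen I))"
    using finite_principal_divisors[OF qO] by (simp add: sum.inter_filter)
  finally show ?thesis .
qed

lemma common_principal_divisors_eq:
  "{principal_ideal F d | d. d \<in> \<O> F \<and> d \<noteq> 0 \<and> dvdO F d \<nu> \<and> dvdO F d \<mu> \<and> dvdO F d q} =
    {I \<in> principal_divisors q. dvdO F (ideal_gen I) \<nu> \<and> dvdO F (ideal_gen I) \<mu>}"
  unfolding principal_divisors_def using ideal_gen_dvdO_iff by blast

end

theorem theorem4p2:
  fixes F :: "complex set" and \<delta> q \<nu> \<mu> :: complex and ps :: "complex list"
  assumes "totally_real_number_field F"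
    and "different_generator F \<delta>"
    and "\<forall>p\<in>set ps. prime_elemO F p" and "q = prod_list ps"
    and "\<nu> \<in> \<O> F" and "\<mu> \<in> \<O> F"
  shows "kloosterman F (\<nu> / \<delta>) (\<mu> / \<delta>) q =
    (\<Sum>I\<in>{principal_ideal F d | d. d \<in> \<O> F \<and> d \<noteq> 0 \<and>
                 dvdO F d \<nu> \<and> dvdO F d \<mu> \<and> dvdO F d q}.
       let d = (SOME d. d \<in> \<O> F \<and> I = principal_ideal F d)
       in of_nat (ideal_norm F d) * kloosterman F (1 / \<delta>) (\<nu> * \<mu> / (\<delta> * d\<^sup>2)) (q / d))"
proof -
  interpret principal_different F \<delta>
    using assms(1,2) by unfold_locales (auto simp: totally_real_number_field_def)
  show ?thesis
    unfolding common_principal_divisors_eq Let_def ideal_gen_def[symmetric]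
    using kloosterman_sum_over_divisors[OF assms(3-6)] .
qed

end
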